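(* Let $d=r=1$, assume (A1), and let $(\rho_n,h_n,\varepsilon_n)$ be positive numbers tending to $0$ with $T/h_n$ integers. Then there exists $c>0$, independent of $n$ and $\mu$, such that the density of $m^{\varepsilon_n}_{\rho_n,h_n}[\mu](t)$ satisfies $\|m^{\varepsilon_n}_{\rho_n,h_n}[\mu](\cdot,t)\|_{L^\infty(\mathbb{R})}\le c$ for all $t\in[0,T]$ and all $\mu\in C([0,T];\mathcal{P}_1(\mathbb{R}))$.
   Context: $\mathcal{P}_1(\mathbb{R})$: probability measures with finite first moment, 1-Wasserstein distance. Assumption (A1) (for $d=r=1$): $F,G:\mathbb{R}\times\mathcal{P}_1\to\mathbb{R}$ uniformly bounded, $F(\cdot,m),G(\cdot,m)\in C^2$ with first and second derivatives bounded uniformly in $x,m$; $\sigma:[0,T]\to\mathbb{R}$ continuous; $m_0$ absolutely continuous with essentially bounded compactly supported density. Grid $x_i=i\rho$, $t_k=kh$, $N=T/h$; $\beta_i$ the piecewise affine hat function with $\beta_i(x_j)=\delta_{ij}$; $I[f]=\sum_if_i\beta_i$. Discrete HJB: $v_{i,N}=G(x_i,\mu(T))$, $v_{i,k}=\inf_{\alpha\in\mathbb{R}}\big[\frac12(I[v_{\cdot,k+1}](x_i-h\alpha+\sqrt h\sigma(t_k))+I[v_{\cdot,k+1}](x_i-h\alpha-\sqrt h\sigma(t_k)))+\frac12h\alpha^2+hF(x_i,\mu(t_k))\big]$; $v_{\rho,h}[\mu](x,t)=I[v_{\cdot,[t/h]}](x)$; $v^\varepsilon_{\rho,h}[\mu](\cdot,t)=\phi_\varepsilon*v_{\rho,h}[\mu](\cdot,t)$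 with $\phi_\varepsilon=\varepsilon^{-1}\phi(\cdot/\varepsilon)$ for a fixed $\phi\in C_c^\infty(\mathbb{R})$, $\phi\ge0$, $\int\phi=1$. Discrete FP: $E_i=[x_i-\rho/2,x_i+\rho/2]$, $\Phi^{\pm}_{i,k}=x_i-hDv^\varepsilon_{\rho,h}[\mu](x_i,t_k)\pm\sqrt h\sigma(t_k)$, $m_{i,0}=\int_{E_i}m_0$, $m_{i,k+1}=\frac12\sum_j[\beta_i(\Phi^+_{j,k})+\beta_i(\Phi^-_{j,k})]m_{j,k}$. $m^\varepsilon_{\rho,h}[\mu](t_k)$ has density $\rho^{-1}\sum_im_{i,k}\mathbb{1}_{E_i}$, and $m^\varepsilon_{\rho,h}[\mu](t)=\frac{t_{k+1}-t}{h}m^\varepsilon_{\rho,h}[\mu](t_k)+\frac{t-t_k}{h}m^\varepsilon_{\rho,h}[\mu](t_{k+1})$ for $t\in[t_k,t_{k+1}]$. *)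

theory Defs
  imports "HOL-Analysis.Analysis" "HOL-Probability.Probability"
begin

definition P1 :: "real measure set" where
  "P1 = {m. prob_space m \<and> sets m = sets (borel :: real measure) \<and> integrable m (\<lambda>x. \<bar>x\<bar>)}"

definition couplings :: "real measure \<Rightarrow> real measure \<Rightarrow> (real \<times> real) measure set" where
  "couplings \<mu> \<nu> = {\<pi>. prob_space \<pi> \<and> sets \<pi> = sets (borel :: (real \<times> real) measure)
      \<and> distr \<pi> borel fst = \<mu> \<and> distr \<pi> borel snd = \<nu>}"

definition W1 :: "real measure \<Rightarrow> real measure \<Rightarrow> real" where
  "W1 \<mu> \<nu> = (INF \<pi>\<in>couplings \<mu> \<nu>. (\<integral>p. \<bar>fst p - snd p\<bar> \<partial>\<pi>))"

definition cont_P1 :: "real \<Rightarrow> (real \<Rightarrow> real measure) \<Rightarrow> bool" where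
  "cont_P1 T \<mu> \<longleftrightarrow> (\<forall>t\<in>{0..T}. \<mu> t \<in> P1) \<and>
     (\<forall>t\<in>{0..T}. \<forall>e>0. \<exists>d>0. \<forall>s\<in>{0..T}. \<bar>s - t\<bar> < d \<longrightarrow> W1 (\<mu> s) (\<mu> t) < e)"

definition C2_bdd :: "(real \<Rightarrow> real) \<Rightarrow> real \<Rightarrow> bool" where
  "C2_bdd f K \<longleftrightarrow> (\<forall>x. f differentiable (at x)) \<and> (\<forall>x. deriv f differentiable (at x))
     \<and> continuous_on UNIV (deriv (deriv f))
     \<and> (\<forall>x. \<bar>deriv f x\<bar> \<le> K \<and> \<bar>deriv (deriv f) x\<bar> \<le> K)"

definition assumption_A1 ::
  "real \<Rightarrow> (real \<Rightarrow> real measure \<Rightarrow> real) \<Rightarrow> (real \<Rightarrow> real measure \<Rightarrow> real)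
     \<Rightarrow> (real \<Rightarrow> real) \<Rightarrow> real measure \<Rightarrow> bool" where
  "assumption_A1 T F G \<sigma> m0 \<longleftrightarrow>
     (\<exists>K. \<forall>m\<in>P1. (\<forall>x. \<bar>F x m\<bar> \<le> K \<and> \<bar>G x m\<bar> \<le> K)
             \<and> C2_bdd (\<lambda>x. F x m) K \<and> C2_bdd (\<lambda>x. G x m) K)
   \<and> continuous_on {0..T} \<sigma>
   \<and> (\<exists>f0 :: real \<Rightarrow> real. f0 \<in> borel_measurable borel \<and> (\<forall>x. f0 x \<ge> 0)
        \<and> m0 = density lborel (\<lambda>x. ennreal (f0 x)) \<and> prob_space m0
        \<and> (\<exists>B. AE x in lborel. f0 x \<le> B)
        \<and> (\<exists>R. AE x in lborel. \<bar>x\<bar> > R \<longrightarrow> f0 x = 0))"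

definition mollifier :: "(real \<Rightarrow> real) \<Rightarrow> bool" where
  "mollifier \<phi> \<longleftrightarrow> (\<forall>k x. ((deriv ^^ k) \<phi>) differentiable (at x))
     \<and> (\<exists>R. \<forall>x. \<bar>x\<bar> > R \<longrightarrow> \<phi> x = 0) \<and> (\<forall>x. \<phi> x \<ge> 0)
     \<and> integrable lborel \<phi> \<and> (\<integral>x. \<phi> x \<partial>lborel) = 1"

definition gridN :: "real \<Rightarrow> real \<Rightarrow> nat" where
  "gridN T h = nat \<lfloor>T / h\<rfloor>"

definition hat :: "real \<Rightarrow> int \<Rightarrow> real \<Rightarrow> real" where
  "hat \<rho> i x = max 0 (1 - \<bar>x - of_int i * \<rho>\<bar> / \<rho>)"

definition interp :: "real \<Rightarrow> (int \<Rightarrow> real) \<Rightarrow> real \<Rightarrow> real" where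
  "interp \<rho> f x = infsum (\<lambda>i. f i * hat \<rho> i x) UNIV"

text \<open>hjb ... j = v_{.,N-j} (backward recursion, j steps from the terminal time)\<close>
fun hjb :: "real \<Rightarrow> real \<Rightarrow> real \<Rightarrow> (real \<Rightarrow> real) \<Rightarrow> (real \<Rightarrow> real measure \<Rightarrow> real)
    \<Rightarrow> (real \<Rightarrow> real measure \<Rightarrow> real) \<Rightarrow> (real \<Rightarrow> real measure) \<Rightarrow> nat \<Rightarrow> int \<Rightarrow> real" where
  "hjb \<rho> h T \<sigma> F G \<mu> 0 = (\<lambda>i. G (of_int i * \<rho>) (\<mu> T))"
| "hjb \<rho> h T \<sigma> F G \<mu> (Suc j) = (\<lambda>i.
     let tk = real (gridN T h - Suc j) * h; xi = of_int i * \<rho> in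
     (INF \<alpha>::real. (interp \<rho> (hjb \<rho> h T \<sigma> F G \<mu> j) (xi - h * \<alpha> + sqrt h * \<sigma> tk)
                   + interp \<rho> (hjb \<rho> h T \<sigma> F G \<mu> j) (xi - h * \<alpha> - sqrt h * \<sigma> tk)) / 2
                 + h * \<alpha>\<^sup>2 / 2 + h * F xi (\<mu> tk)))"

definition vgrid :: "real \<Rightarrow> real \<Rightarrow> real \<Rightarrow> (real \<Rightarrow> real) \<Rightarrow> (real \<Rightarrow> real measure \<Rightarrow> real)
    \<Rightarrow> (real \<Rightarrow> real measure \<Rightarrow> real) \<Rightarrow> (real \<Rightarrow> real measure) \<Rightarrow> nat \<Rightarrow> int \<Rightarrow> real" where
  "vgrid \<rho> h T \<sigma> F G \<mu> k = hjb \<rho> h T \<sigma> F G \<mu> (gridN T h - k)"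

definition vdisc :: "real \<Rightarrow> real \<Rightarrow> real \<Rightarrow> (real \<Rightarrow> real) \<Rightarrow> (real \<Rightarrow> real measure \<Rightarrow> real)
    \<Rightarrow> (real \<Rightarrow> real measure \<Rightarrow> real) \<Rightarrow> (real \<Rightarrow> real measure) \<Rightarrow> real \<Rightarrow> real \<Rightarrow> real" where
  "vdisc \<rho> h T \<sigma> F G \<mu> x t = interp \<rho> (vgrid \<rho> h T \<sigma> F G \<mu> (nat \<lfloor>t / h\<rfloor>)) x"

definition veps :: "(real \<Rightarrow> real) \<Rightarrow> real \<Rightarrow> real \<Rightarrow> real \<Rightarrow> real \<Rightarrow> (real \<Rightarrow> real)
    \<Rightarrow> (real \<Rightarrow> real measure \<Rightarrow> real) \<Rightarrow> (real \<Rightarrow> real measure \<Rightarrow> real) \<Rightarrow> (real \<Rightarrow> real measure)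
    \<Rightarrow> real \<Rightarrow> real \<Rightarrow> real" where
  "veps \<phi> \<epsilon> \<rho> h T \<sigma> F G \<mu> x t =
     (\<integral>y. (1 / \<epsilon>) * \<phi> ((x - y) / \<epsilon>) * vdisc \<rho> h T \<sigma> F G \<mu> y t \<partial>lborel)"

fun fp :: "(real \<Rightarrow> real) \<Rightarrow> real \<Rightarrow> real \<Rightarrow> real \<Rightarrow> real \<Rightarrow> (real \<Rightarrow> real)
    \<Rightarrow> (real \<Rightarrow> real measure \<Rightarrow> real) \<Rightarrow> (real \<Rightarrow> real measure \<Rightarrow> real) \<Rightarrow> real measure
    \<Rightarrow> (real \<Rightarrow> real measure) \<Rightarrow> nat \<Rightarrow> int \<Rightarrow> real" where
  "fp \<phi> \<epsilon> \<rho> h T \<sigma> F G m0 \<mu> 0 =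
     (\<lambda>i. measure m0 {of_int i * \<rho> - \<rho> / 2 .. of_int i * \<rho> + \<rho> / 2})"
| "fp \<phi> \<epsilon> \<rho> h T \<sigma> F G m0 \<mu> (Suc k) = (\<lambda>i.
     let tk = real k * h;
         Dv = (\<lambda>x. deriv (\<lambda>z. veps \<phi> \<epsilon> \<rho> h T \<sigma> F G \<mu> z tk) x);
         Phip = (\<lambda>j. of_int j * \<rho> - h * Dv (of_int j * \<rho>) + sqrt h * \<sigma> tk);
         Phim = (\<lambda>j. of_int j * \<rho> - h * Dv (of_int j * \<rho>) - sqrt h * \<sigma> tk)
     in (1 / 2) * infsum (\<lambda>j. (hat \<rho> i (Phip j) + hat \<rho> i (Phim j)) * fp \<phi> \<epsilon> \<rho> h T \<sigma> F G m0 \<mu> k j) UNIV)"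

definition dens_grid :: "(real \<Rightarrow> real) \<Rightarrow> real \<Rightarrow> real \<Rightarrow> real \<Rightarrow> real \<Rightarrow> (real \<Rightarrow> real)
    \<Rightarrow> (real \<Rightarrow> real measure \<Rightarrow> real) \<Rightarrow> (real \<Rightarrow> real measure \<Rightarrow> real) \<Rightarrow> real measure
    \<Rightarrow> (real \<Rightarrow> real measure) \<Rightarrow> nat \<Rightarrow> real \<Rightarrow> real" where
  "dens_grid \<phi> \<epsilon> \<rho> h T \<sigma> F G m0 \<mu> k x =
     (1 / \<rho>) * infsum (\<lambda>i. fp \<phi> \<epsilon> \<rho> h T \<sigma> F G m0 \<mu> k i
        * indicator {of_int i * \<rho> - \<rho> / 2 .. of_int i * \<rho> + \<rho> / 2} x) UNIV"

definition dens :: "(real \<Rightarrow> real) \<Rightarrow> real \<Rightarrow> real \<Rightarrow> real \<Rightarrow> real \<Rightarrow> (real \<Rightarrow> real)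
    \<Rightarrow> (real \<Rightarrow> real measure \<Rightarrow> real) \<Rightarrow> (real \<Rightarrow> real measure \<Rightarrow> real) \<Rightarrow> real measure
    \<Rightarrow> (real \<Rightarrow> real measure) \<Rightarrow> real \<Rightarrow> real \<Rightarrow> real" where
  "dens \<phi> \<epsilon> \<rho> h T \<sigma> F G m0 \<mu> t x =
     (let k = nat \<lfloor>t / h\<rfloor> in
        ((real (Suc k) * h - t) / h) * dens_grid \<phi> \<epsilon> \<rho> h T \<sigma> F G m0 \<mu> k x
      + ((t - real k * h) / h) * dens_grid \<phi> \<epsilon> \<rho> h T \<sigma> F G m0 \<mu> (Suc k) x)"

end

theory Submission
  imports Defs
begin

text \<open>
  The discrete value functions are bounded by \<open>K(1+T)\<close> and semiconcave uniformly in \<open>\<mu>\<close>: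
  their second differences on the grid are at most \<open>K(1+T)\<rho>\<^sup>2\<close>, since the costs have second
  derivatives bounded by \<open>K\<close> and one-sided bounds on second differences survive interpolation,
  the infimum over controls and mollification. Hence the derivative \<open>Dv\<^sup>\<epsilon>\<close> of the mollified value
  function is bounded and its increments over one mesh step are at most \<open>K(1+T)\<rho>\<close>, so the
  characteristics \<open>x\<^sub>j - h Dv\<^sup>\<epsilon>(x\<^sub>j) \<plusminus> \<surd>h \<sigma>\<close> have gaps at least \<open>\<rho>(1 - K(1+T)h)\<close>. When
  \<open>K(1+T)h \<le> 1/3\<close>, a hat function \<open>\<beta>\<^sub>i\<close> therefore meets at most three of them and collects total
  weight at most \<open>1 + 2K(1+T)h\<close>; the masses grow by at most this factor per time step, and
  \<open>(1 + 2K(1+T)h)\<^bsup>T/h+1\<^esup> \<le> e\<^bsup>2K(1+T)T+1\<^esup>\<close>. As \<open>h\<^sub>n \<rightarrow> 0\<close> this covers all but finitely many \<open>n\<close>;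
  for those, a crude counting bound that depends on \<open>n\<close> but not on \<open>\<mu>\<close> suffices.
\<close>

section \<open>Piecewise linear interpolation\<close>

lemma hat_nonneg: "0 \<le> hat \<rho> i x"
  by (simp add: hat_def)

lemma hat_le_1: "0 < \<rho> \<Longrightarrow> hat \<rho> i x \<le> 1"
  by (simp add: hat_def)

lemma hat_neq_0_imp_near:
  assumes "0 < \<rho>" "hat \<rho> i x \<noteq> 0"
  shows "\<bar>x - of_int i * \<rho>\<bar> < \<rho>"
proof -
  have "0 < 1 - \<bar>x - of_int i * \<rho>\<bar> / \<rho>"
    using assms(2) unfolding hat_def by (metis max.absorb1 not_less)
  then show ?thesis
    using assms(1) by (simp add: field_simps)
qed

lemma interp_eq_sum:
  assumes "finite S" "\<And>i. hat \<rho> i x \<noteq> 0 \<Longrightarrow> i \<in> S"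
  shows "interp \<rho> f x = (\<Sum>i\<in>S. f i * hat \<rho> i x)"
proof -
  have "interp \<rho> f x = infsum (\<lambda>i. f i * hat \<rho> i x) S"
    unfolding interp_def by (rule infsum_cong_neutral) (use assms in auto)
  also have "\<dots> = (\<Sum>i\<in>S. f i * hat \<rho> i x)"
    using assms(1) by (rule infsum_finite)
  finally show ?thesis .
qed

lemma interp_eq_frac:
  assumes "0 < \<rho>"
  shows "interp \<rho> f x = (1 - frac (x/\<rho>)) * f \<lfloor>x/\<rho>\<rfloor> + frac (x/\<rho>) * f (\<lfloor>x/\<rho>\<rfloor> + 1)"
proof -
  define i0 where "i0 = \<lfloor>x/\<rho>\<rfloor>"
  define \<theta> where "\<theta> = frac (x/\<rho>)"
  have \<theta>: "0 \<le> \<theta>" "\<theta> < 1"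
    unfolding \<theta>_def by (simp_all add: frac_lt_1)
  have x: "x = (of_int i0 + \<theta>) * \<rho>"
    using assms unfolding \<theta>_def i0_def frac_def by (simp add: field_simps)
  have support: "i \<in> {i0, i0 + 1}" if "hat \<rho> i x \<noteq> 0" for i
  proof -
    have "\<bar>(of_int i0 + \<theta> - of_int i) * \<rho>\<bar> < 1 * \<rho>"
      using hat_neq_0_imp_near[OF assms that] x by (simp add: algebra_simps)
    then have "\<bar>of_int i0 + \<theta> - of_int i\<bar> < 1"
      using assms by (simp add: abs_mult)
    then have "i0 - 1 < i \<and> i < i0 + 2"
      using \<theta> by linarith
    then show ?thesis by auto
  qed
  have "hat \<rho> i0 x = 1 - \<theta>" "hat \<rho> (i0 + 1) x = \<theta>"
  proof -
    have "x - of_int i0 * \<rho> = \<theta> * \<rho>" "x - of_int (i0 + 1) * \<rho> = (\<theta> - 1) * \<rho>"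
      using x by (simp_all add: algebra_simps)
    then show "hat \<rho> i0 x = 1 - \<theta>" "hat \<rho> (i0 + 1) x = \<theta>"
      using assms \<theta> by (simp_all add: hat_def abs_mult)
  qed
  moreover have "interp \<rho> f x = (\<Sum>i\<in>{i0, i0 + 1}. f i * hat \<rho> i x)"
    by (rule interp_eq_sum) (use support in auto)
  ultimately show ?thesis
    unfolding \<theta>_def i0_def by simp
qed

lemma interp_add_mesh:
  assumes "0 < \<rho>"
  shows "interp \<rho> f (x + \<rho>) = interp \<rho> (\<lambda>i. f (i + 1)) x"
proof -
  have "(x + \<rho>) / \<rho> = x / \<rho> + 1"
    using assms by (simp add: field_simps)
  then show ?thesis
    using assms by (simp add: interp_eq_frac frac_def)
qed

lemma interp_diff_mesh:
  assumes "0 < \<rho>"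
  shows "interp \<rho> f (x - \<rho>) = interp \<rho> (\<lambda>i. f (i - 1)) x"
proof -
  have "(x - \<rho>) / \<rho> = x / \<rho> - 1"
    using assms by (simp add: field_simps)
  then show ?thesis
    using assms by (simp add: interp_eq_frac frac_def)
qed

lemma interp_diff: "0 < \<rho> \<Longrightarrow> interp \<rho> f x - interp \<rho> g x = interp \<rho> (\<lambda>i. f i - g i) x"
  by (simp add: interp_eq_frac algebra_simps)

lemma interp_affine: "0 < \<rho> \<Longrightarrow> interp \<rho> (\<lambda>i. f i - a * (of_int i * \<rho>)) x = interp \<rho> f x - a * x"
  by (simp add: interp_eq_frac frac_def algebra_simps)

lemma interp_le:
  assumes "0 < \<rho>" "\<And>i. f i \<le> B"
  shows "interp \<rho> f x \<le> B"
proof -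
  have "(1 - frac (x/\<rho>)) * f \<lfloor>x/\<rho>\<rfloor> \<le> (1 - frac (x/\<rho>)) * B"
    "frac (x/\<rho>) * f (\<lfloor>x/\<rho>\<rfloor> + 1) \<le> frac (x/\<rho>) * B"
    using assms(2) frac_lt_1[of "x/\<rho>"] by (simp_all add: mult_left_mono)
  then show ?thesis
    using assms(1) by (simp add: interp_eq_frac algebra_simps)
qed

lemma interp_ge:
  assumes "0 < \<rho>" "\<And>i. B \<le> f i"
  shows "B \<le> interp \<rho> f x"
  using interp_le[of \<rho> "\<lambda>i. - f i" "- B" x] assms by (simp add: interp_eq_frac algebra_simps)

lemma abs_interp_le:
  assumes "0 < \<rho>" "\<And>i. \<bar>f i\<bar> \<le> B"
  shows "\<bar>interp \<rho> f x\<bar> \<le> B"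
proof -
  have "f i \<le> B" "- B \<le> f i" for i
    using assms(2)[of i] by (simp_all add: abs_le_iff)
  then have "interp \<rho> f x \<le> B" "- B \<le> interp \<rho> f x"
    using assms(1) by (blast intro: interp_le interp_ge)+
  then show ?thesis by simp
qed

lemma interp_second_diff_le:
  assumes "0 < \<rho>" "\<And>i. f (i + 1) + f (i - 1) - 2 * f i \<le> S"
  shows "interp \<rho> f (x + \<rho>) + interp \<rho> f (x - \<rho>) - 2 * interp \<rho> f x \<le> S"
proof -
  have "interp \<rho> f (x + \<rho>) + interp \<rho> f (x - \<rho>) - 2 * interp \<rho> f x
      = interp \<rho> (\<lambda>i. f (i + 1) + f (i - 1) - 2 * f i) x"
    unfolding interp_add_mesh[OF assms(1)] interp_diff_mesh[OF assms(1)]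
    by (simp add: interp_eq_frac[OF assms(1)] algebra_simps)
  also have "\<dots> \<le> S"
    using assms by (rule interp_le)
  finally show ?thesis .
qed

lemma int_increments_ge_imp:
  fixes g :: "int \<Rightarrow> real"
  assumes "\<And>j. \<delta> \<le> g (j + 1) - g j" "i \<le> j"
  shows "g i + of_int (j - i) * \<delta> \<le> g j"
  using assms(2)
proof (induction j rule: int_ge_induct)
  case (step j)
  then show ?case
    using assms(1)[of j] by (simp add: algebra_simps)
qed simp

lemma interp_antimono:
  assumes \<rho>: "0 < \<rho>" and g: "\<And>i. g (i + 1) \<le> g i" and "y \<le> y'"
  shows "interp \<rho> g y' \<le> interp \<rho> g y"
proof -
  define i where "i = \<lfloor>y/\<rho>\<rfloor>"
  define i' where "i' = \<lfloor>y'/\<rho>\<rfloor>"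
  have "y/\<rho> \<le> y'/\<rho>"
    using assms by (simp add: divide_right_mono)
  then have "i \<le> i'"
    unfolding i_def i'_def by (rule floor_mono)
  have frac: "0 \<le> frac (y/\<rho>)" "frac (y/\<rho>) \<le> 1" "0 \<le> frac (y'/\<rho>)" "frac (y'/\<rho>) \<le> 1"
    using frac_lt_1 by (auto intro: less_imp_le)
  show ?thesis
  proof (cases "i = i'")
    case True
    then have "frac (y/\<rho>) \<le> frac (y'/\<rho>)"
      using \<open>y/\<rho> \<le> y'/\<rho>\<close> unfolding i_def i'_def frac_def by simp
    then have "frac (y'/\<rho>) * (g (i + 1) - g i) \<le> frac (y/\<rho>) * (g (i + 1) - g i)"
      using g[of i] by (simp add: mult_right_mono_neg)
    then show ?thesis
      using \<rho> True unfolding i_def i'_def by (simp add: interp_eq_frac algebra_simps)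
  next
    case False
    then have "g i' \<le> g (i + 1)"
      using int_increments_ge_imp[of 0 "\<lambda>j. - g j" "i + 1" i'] g \<open>i \<le> i'\<close> by force
    moreover have "interp \<rho> g y' \<le> g i'"
      using \<rho> g[of i'] frac mult_left_mono[of "g (i' + 1)" "g i'" "frac (y'/\<rho>)"]
      unfolding i'_def by (simp add: interp_eq_frac algebra_simps)
    moreover have "g (i + 1) \<le> interp \<rho> g y"
      using \<rho> g[of i] frac mult_left_mono[of "g (i + 1)" "g i" "1 - frac (y/\<rho>)"]
      unfolding i_def by (simp add: interp_eq_frac algebra_simps)
    ultimately show ?thesis by linarith
  qed
qed

lemma interp_increment_le:
  assumes "0 < \<rho>" "\<And>i. e (i + 1) - e i \<le> a * \<rho>" "y \<le> y'"
  shows "interp \<rho> e y' - interp \<rho> e y \<le> a * (y' - y)"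
proof -
  have "interp \<rho> (\<lambda>i. e i - a * (of_int i * \<rho>)) y' \<le> interp \<rho> (\<lambda>i. e i - a * (of_int i * \<rho>)) y"
  proof (rule interp_antimono[OF assms(1) _ assms(3)])
    fix i
    have "e (i + 1) - e i \<le> a * \<rho>" by (rule assms(2))
    then show "e (i + 1) - a * (of_int (i + 1) * \<rho>) \<le> e i - a * (of_int i * \<rho>)"
      by (simp add: algebra_simps)
  qed
  then show ?thesis
    unfolding interp_affine[OF assms(1)] by (simp add: algebra_simps)
qed

lemma continuous_on_interp:
  assumes "0 < \<rho>"
  shows "continuous_on S (interp \<rho> f)"
proof -
  have "isCont (interp \<rho> f) x0" for x0
  proof -
    define i0 where "i0 = \<lfloor>x0/\<rho>\<rfloor>"
    have local: "interp \<rho> f x = (\<Sum>i\<in>{i0 - 1..i0 + 2}. f i * hat \<rho> i x)" if "x \<in> ball x0 \<rho>" for x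
    proof (rule interp_eq_sum)
      fix i assume "hat \<rho> i x \<noteq> 0"
      then have "\<bar>x - of_int i * \<rho>\<bar> < \<rho>"
        using hat_neq_0_imp_near assms by blast
      moreover have "\<bar>x0 - x\<bar> < \<rho>"
        using that by (simp add: dist_real_def)
      ultimately have "\<bar>(x0/\<rho> - of_int i) * \<rho>\<bar> < 2 * \<rho>"
        using assms by (simp add: algebra_simps)
      then have "\<bar>x0/\<rho> - of_int i\<bar> < 2"
        using assms by (simp add: abs_mult)
      moreover have "of_int i0 \<le> x0/\<rho>" "x0/\<rho> < of_int i0 + 1"
        unfolding i0_def by linarith+
      ultimately have "i0 - 1 \<le> i \<and> i \<le> i0 + 2"
        by linarith
      then show "i \<in> {i0 - 1..i0 + 2}" by simp
    qed simp
    have "continuous_on (ball x0 \<rho>) (\<lambda>x. \<Sum>i\<in>{i0 - 1..i0 + 2}. f i * hat \<rho> i x)"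
      unfolding hat_def using assms by (intro continuous_intros) auto
    then have "continuous_on (ball x0 \<rho>) (interp \<rho> f)"
      by (rule continuous_on_eq) (use local in auto)
    then show ?thesis
      using assms by (metis centre_in_ball continuous_on_eq_continuous_at open_ball)
  qed
  then show ?thesis
    by (simp add: continuous_at_imp_continuous_on)
qed

lemma C2_bdd_second_diff_le:
  fixes g :: "real \<Rightarrow> real"
  assumes g: "C2_bdd g K" and "0 \<le> d"
  shows "g (x + d) + g (x - d) - 2 * g x \<le> K * d\<^sup>2"
proof -
  have g1: "(g has_real_derivative deriv g y) (at y)" for y
    using g unfolding C2_bdd_def by (simp add: DERIV_deriv_iff_real_differentiable)
  have g2: "(deriv g has_real_derivative deriv (deriv g) y) (at y)" for y
    using g unfolding C2_bdd_def by (simp add: DERIV_deriv_iff_real_differentiable)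
  have lipschitz: "\<bar>deriv g a - deriv g b\<bar> \<le> K * \<bar>a - b\<bar>" for a b
    using field_differentiable_bound[of UNIV "deriv g" "deriv (deriv g)" K a b] g2 g
    by (auto simp: C2_bdd_def has_field_derivative_at_within)
  define k where "k s = g (x + s) + g (x - s) - 2 * g x - K * s\<^sup>2" for s
  have k': "(k has_real_derivative deriv g (x + s) - deriv g (x - s) - K * (2 * s)) (at s)" for s
  proof -
    have plus: "((\<lambda>s. g (x + s)) has_real_derivative deriv g (x + s) * 1) (at s)"
      by (rule DERIV_chain2[OF g1]) (auto intro!: derivative_eq_intros)
    have minus: "((\<lambda>s. g (x - s)) has_real_derivative deriv g (x - s) * (- 1)) (at s)"
      by (rule DERIV_chain2[OF g1]) (auto intro!: derivative_eq_intros)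
    have square: "((\<lambda>s. K * s\<^sup>2) has_real_derivative K * (2 * s)) (at s)"
      by (auto intro!: derivative_eq_intros)
    show ?thesis
      using DERIV_diff[OF DERIV_diff[OF DERIV_add[OF plus minus] DERIV_const[of "2 * g x"]] square]
      unfolding k_def by simp
  qed
  have "k d \<le> k 0"
  proof (rule DERIV_nonpos_imp_nonincreasing[OF \<open>0 \<le> d\<close>])
    fix s assume "0 \<le> s" "s \<le> d"
    then have "deriv g (x + s) - deriv g (x - s) - K * (2 * s) \<le> 0"
      using lipschitz[of "x + s" "x - s"] by simp
    then show "\<exists>y. (k has_real_derivative y) (at s) \<and> y \<le> 0"
      using k' by blast
  qed
  then show ?thesis
    unfolding k_def by simp
qed

lemma DERIV_le_of_increments_le:
  fixes f :: "real \<Rightarrow> real"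
  assumes "(f has_real_derivative D) (at x)" "\<And>y. x < y \<Longrightarrow> f y - f x \<le> a * (y - x)"
  shows "D \<le> a"
proof -
  have "((\<lambda>t. (f (x + t) - f x) / t) \<longlongrightarrow> D) (at_right 0)"
    using DERIV_D[OF assms(1)] by (rule filterlim_mono) (simp_all add: at_le)
  moreover have "\<forall>\<^sub>F t in at_right 0. (f (x + t) - f x) / t \<le> a"
    using eventually_at_right_less[of 0]
  proof (rule eventually_mono)
    fix t :: real assume "0 < t"
    then show "(f (x + t) - f x) / t \<le> a"
      using assms(2)[of "x + t"] by (simp add: divide_le_eq)
  qed
  ultimately show ?thesis
    by (rule tendsto_upperbound) simp
qed

lemma lborel_integral_eq_interval:
  fixes k :: "real \<Rightarrow> real"
  assumes "continuous_on UNIV k" "\<And>y. y \<notin> {a..b} \<Longrightarrow> k y = 0"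
  shows "integrable lborel k" "integral\<^sup>L lborel k = integral {a..b} k"
proof -
  have "k y = indicator {a..b} y *\<^sub>R k y" for y
    using assms(2)[of y] by (cases "y \<in> {a..b}") auto
  then have k: "k = (\<lambda>y. indicator {a..b} y *\<^sub>R k y)" ..
  have "integrable lborel (\<lambda>y. indicator {a..b} y *\<^sub>R k y)"
    by (rule borel_integrable_compact) (auto intro: continuous_on_subset[OF assms(1)])
  then show integrable: "integrable lborel k"
    using k by simp
  have "integral\<^sup>L lborel k = integral UNIV k"
    using integral_lborel[OF integrable] by simp
  also have "\<dots> = integral UNIV (\<lambda>y. if y \<in> {a..b} then k y else 0)"
    by (rule arg_cong[where f="integral UNIV"]) (use assms(2) in auto)
  also have "\<dots> = integral {a..b} k"
    by (rule integral_restrict_UNIV)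
  finally show "integral\<^sup>L lborel k = integral {a..b} k" .
qed

section \<open>Mollification\<close>

definition mollify :: "(real \<Rightarrow> real) \<Rightarrow> real \<Rightarrow> (real \<Rightarrow> real) \<Rightarrow> real \<Rightarrow> real" where
  "mollify \<phi> \<epsilon> g x = (\<integral>y. (1 / \<epsilon>) * \<phi> ((x - y) / \<epsilon>) * g y \<partial>lborel)"

lemma mollify_eq_shift: "mollify \<phi> \<epsilon> g x = (\<integral>z. (1 / \<epsilon>) * \<phi> (z / \<epsilon>) * g (x - z) \<partial>lborel)"
  unfolding mollify_def
  using lborel_integral_real_affine[where c="-1" and t=x, of "\<lambda>y. (1 / \<epsilon>) * \<phi> ((x - y) / \<epsilon>) * g y"]
  by simp

locale mollifier_kernel =
  fixes \<phi> :: "real \<Rightarrow> real" and R Pm :: real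
  assumes has_deriv: "\<And>x. (\<phi> has_real_derivative deriv \<phi> x) (at x)"
    and continuous_deriv: "continuous_on UNIV (deriv \<phi>)"
    and support: "\<And>x. R < \<bar>x\<bar> \<Longrightarrow> \<phi> x = 0"
    and nonneg: "\<And>x. 0 \<le> \<phi> x"
    and integral_1: "integral\<^sup>L lborel \<phi> = 1"
    and abs_deriv_le: "\<And>x. \<bar>deriv \<phi> x\<bar> \<le> Pm"
    and R_nonneg: "0 \<le> R"
begin

lemma kernel_continuous: "continuous_on UNIV \<phi>"
  using has_deriv by (meson DERIV_isCont continuous_at_imp_continuous_on)

lemma Pm_nonneg: "0 \<le> Pm"
  using abs_deriv_le[of 0] by linarith

lemma scaled_support: "0 < \<epsilon> \<Longrightarrow> \<epsilon> * R < \<bar>y\<bar> \<Longrightarrow> \<phi> (y / \<epsilon>) = 0"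
  by (rule support) (simp add: abs_divide pos_less_divide_eq mult.commute)

lemma integrable_scaled_mult:
  assumes "0 < \<epsilon>" "continuous_on UNIV g"
  shows "integrable lborel (\<lambda>z. (1 / \<epsilon>) * \<phi> (z / \<epsilon>) * g z)"
proof (rule lborel_integral_eq_interval(1)[where a="- \<epsilon> * R" and b="\<epsilon> * R"])
  show "continuous_on UNIV (\<lambda>z. (1 / \<epsilon>) * \<phi> (z / \<epsilon>) * g z)"
    using assms by (intro continuous_intros continuous_on_compose2[OF kernel_continuous]) auto
  show "(1 / \<epsilon>) * \<phi> (y / \<epsilon>) * g y = 0" if "y \<notin> {- \<epsilon> * R..\<epsilon> * R}" for y
  proof -
    have "\<epsilon> * R < \<bar>y\<bar>"
      using that by auto
    then show ?thesis
      using scaled_support[OF assms(1)] by simp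
  qed
qed

lemma integral_scaled: "0 < \<epsilon> \<Longrightarrow> (\<integral>z. (1 / \<epsilon>) * \<phi> (z / \<epsilon>) \<partial>lborel) = 1"
  using lborel_integral_real_affine[where c=\<epsilon> and t=0, of "\<lambda>z. (1 / \<epsilon>) * \<phi> (z / \<epsilon>)"] integral_1
  by simp

text \<open>The functional \<open>w \<mapsto> (w (x' + \<rho>) - w x') - (w (x + \<rho>) - w x)\<close> is linear and translation
  invariant and the kernel is a probability density, so upper bounds for it pass to mollifications.\<close>
lemma mollify_increment_diff_le:
  assumes \<epsilon>: "0 < \<epsilon>" and w: "continuous_on UNIV w"
    and slope: "\<And>y y'. y \<le> y' \<Longrightarrow> (w (y' + \<rho>) - w y') - (w (y + \<rho>) - w y) \<le> a * (y' - y)"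
    and "x \<le> x'"
  shows "(mollify \<phi> \<epsilon> w (x' + \<rho>) - mollify \<phi> \<epsilon> w x') - (mollify \<phi> \<epsilon> w (x + \<rho>) - mollify \<phi> \<epsilon> w x)
    \<le> a * (x' - x)"
proof -
  define k where "k z = (1 / \<epsilon>) * \<phi> (z / \<epsilon>)" for z
  have integrable: "integrable lborel (\<lambda>z. k z * w (c - z))" for c
    unfolding k_def
    by (rule integrable_scaled_mult[OF \<epsilon>]) (intro continuous_on_compose2[OF w] continuous_intros; simp)
  have "(mollify \<phi> \<epsilon> w (x' + \<rho>) - mollify \<phi> \<epsilon> w x') - (mollify \<phi> \<epsilon> w (x + \<rho>) - mollify \<phi> \<epsilon> w x)
      = (\<integral>z. k z * ((w (x' - z + \<rho>) - w (x' - z)) - (w (x - z + \<rho>) - w (x - z))) \<partial>lborel)"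
  proof -
    have "(mollify \<phi> \<epsilon> w (x' + \<rho>) - mollify \<phi> \<epsilon> w x') - (mollify \<phi> \<epsilon> w (x + \<rho>) - mollify \<phi> \<epsilon> w x)
        = (\<integral>z. k z * w (x' + \<rho> - z) - k z * w (x' - z) - k z * w (x + \<rho> - z) + k z * w (x - z) \<partial>lborel)"
      unfolding mollify_eq_shift k_def[symmetric] using integrable by simp
    also have "\<dots> = (\<integral>z. k z * ((w (x' - z + \<rho>) - w (x' - z)) - (w (x - z + \<rho>) - w (x - z))) \<partial>lborel)"
      by (rule Bochner_Integration.integral_cong) (auto simp: algebra_simps)
    finally show ?thesis .
  qed
  also have "\<dots> \<le> (\<integral>z. k z * (a * (x' - x)) \<partial>lborel)"
  proof (rule integral_mono)
    show "integrable lborel (\<lambda>z. k z * ((w (x' - z + \<rho>) - w (x' - z)) - (w (x - z + \<rho>) - w (x - z))))"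
    proof -
      have "(\<lambda>z. k z * ((w (x' - z + \<rho>) - w (x' - z)) - (w (x - z + \<rho>) - w (x - z))))
          = (\<lambda>z. k z * w (x' + \<rho> - z) - k z * w (x' - z) - k z * w (x + \<rho> - z) + k z * w (x - z))"
        by (auto simp: algebra_simps)
      then show ?thesis
        using integrable by simp
    qed
    show "integrable lborel (\<lambda>z. k z * (a * (x' - x)))"
      using integrable_scaled_mult[OF \<epsilon>, of "\<lambda>_. a * (x' - x)"] unfolding k_def by simp
    show "k z * ((w (x' - z + \<rho>) - w (x' - z)) - (w (x - z + \<rho>) - w (x - z))) \<le> k z * (a * (x' - x))" for z
      using slope[of "x - z" "x' - z"] \<open>x \<le> x'\<close> \<epsilon> nonneg[of "z / \<epsilon>"]
      by (intro mult_left_mono) (auto simp: k_def)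
  qed
  also have "\<dots> = a * (x' - x)"
    using integral_scaled[OF \<epsilon>] unfolding k_def by simp
  finally show ?thesis .
qed

lemma mollify_eq_integral_interval:
  assumes \<epsilon>: "0 < \<epsilon>" and g: "continuous_on UNIV g" and "\<bar>x - c\<bar> \<le> r"
  shows "mollify \<phi> \<epsilon> g x = integral {c - r - \<epsilon> * R .. c + r + \<epsilon> * R} (\<lambda>t. (1 / \<epsilon>) * \<phi> ((x - t) / \<epsilon>) * g t)"
  unfolding mollify_def
proof (rule lborel_integral_eq_interval(2))
  show "continuous_on UNIV (\<lambda>t. (1 / \<epsilon>) * \<phi> ((x - t) / \<epsilon>) * g t)"
    using \<epsilon> by (intro continuous_intros continuous_on_compose2[OF kernel_continuous] g) auto
  fix y assume "y \<notin> {c - r - \<epsilon> * R .. c + r + \<epsilon> * R}"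
  then have "\<epsilon> * R < \<bar>x - y\<bar>"
    using assms(3) by auto
  then show "(1 / \<epsilon>) * \<phi> ((x - y) / \<epsilon>) * g y = 0"
    using scaled_support[OF \<epsilon>] by simp
qed

lemma scaled_has_real_derivative:
  assumes "0 < \<epsilon>"
  shows "((\<lambda>x. (1 / \<epsilon>) * \<phi> ((x - t) / \<epsilon>) * c) has_real_derivative deriv \<phi> ((x - t) / \<epsilon>) * c / \<epsilon>\<^sup>2) (at x)"
proof -
  have "((\<lambda>x. \<phi> ((x - t) / \<epsilon>)) has_real_derivative deriv \<phi> ((x - t) / \<epsilon>) * (1 / \<epsilon>)) (at x)"
    by (rule DERIV_chain2[OF has_deriv]) (use assms in \<open>auto intro!: derivative_eq_intros\<close>)
  from DERIV_cmult_right[OF DERIV_cmult[OF this, of "1 / \<epsilon>"], of c]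
  show ?thesis
    by (simp add: power2_eq_square)
qed

lemma mollify_has_derivative:
  fixes x0 :: real
  assumes \<epsilon>: "0 < \<epsilon>" and g: "continuous_on UNIV g"
  defines "I \<equiv> {x0 - 1 - \<epsilon> * R .. x0 + 1 + \<epsilon> * R}"
  shows "(mollify \<phi> \<epsilon> g has_real_derivative integral I (\<lambda>t. deriv \<phi> ((x0 - t) / \<epsilon>) * g t / \<epsilon>\<^sup>2)) (at x0)"
proof -
  define U where "U = ball x0 (1::real)"
  define f where "f x t = (1 / \<epsilon>) * \<phi> ((x - t) / \<epsilon>) * g t" for x t
  define f' where "f' x t = deriv \<phi> ((x - t) / \<epsilon>) * g t / \<epsilon>\<^sup>2" for x t
  have f_deriv: "((\<lambda>x. f x t) has_real_derivative f' x t) (at x within U)" for x t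
    unfolding f_def f'_def by (rule has_field_derivative_at_within[OF scaled_has_real_derivative[OF \<epsilon>]])
  have f_integrable: "f x integrable_on cbox a b" for x a b
    unfolding f_def cbox_interval using \<epsilon>
    by (intro integrable_continuous_interval continuous_intros continuous_on_compose2[OF kernel_continuous]
        continuous_on_subset[OF g]) auto
  define a b where "a = x0 - 1 - \<epsilon> * R" and "b = x0 + 1 + \<epsilon> * R"
  have f'_cont: "continuous_on (U \<times> cbox a b) (\<lambda>(x, t). f' x t)"
  proof -
    have "continuous_on (U \<times> cbox a b) (\<lambda>z. deriv \<phi> ((fst z - snd z) / \<epsilon>) * g (snd z) / \<epsilon>\<^sup>2)"
      using \<epsilon> by (intro continuous_intros continuous_on_compose2[OF continuous_deriv]
          continuous_on_compose2[OF g]) auto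
    then show ?thesis
      unfolding f'_def by (simp add: case_prod_beta)
  qed
  have "I = cbox a b"
    unfolding I_def a_def b_def by simp
  moreover have "((\<lambda>x. integral (cbox a b) (f x)) has_real_derivative integral (cbox a b) (f' x0)) (at x0 within U)"
    by (rule leibniz_rule_field_derivative[OF f_deriv f_integrable f'_cont]) (simp_all add: U_def)
  ultimately have "((\<lambda>x. integral I (f x)) has_real_derivative integral I (f' x0)) (at x0 within U)"
    by simp
  moreover have "at x0 within U = at x0"
    unfolding U_def by (rule at_within_open) simp_all
  ultimately have leibniz: "((\<lambda>x. integral I (f x)) has_real_derivative integral I (f' x0)) (at x0)"
    by simp
  have "integral I (f x) = mollify \<phi> \<epsilon> g x" if "x \<in> U" for x
  proof -
    have "\<bar>x - x0\<bar> \<le> 1"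
      using that unfolding U_def by (simp add: dist_real_def abs_minus_commute)
    then show ?thesis
      unfolding I_def f_def by (rule mollify_eq_integral_interval[OF \<epsilon> g, symmetric])
  qed
  then show ?thesis
    using has_field_derivative_transform_within_open[OF leibniz, of U] unfolding f'_def
    by (simp add: U_def)
qed

lemma mollify_deriv_bound:
  assumes \<epsilon>: "0 < \<epsilon>" and g: "continuous_on UNIV g" and g_le: "\<And>y. \<bar>g y\<bar> \<le> B"
  shows "\<exists>D. (mollify \<phi> \<epsilon> g has_real_derivative D) (at x0) \<and> \<bar>D\<bar> \<le> (2 + 2 * \<epsilon> * R) * Pm * B / \<epsilon>\<^sup>2"
proof -
  define a where "a = x0 - 1 - \<epsilon> * R"
  define b where "b = x0 + 1 + \<epsilon> * R"
  have "norm (integral {a..b} (\<lambda>t. deriv \<phi> ((x0 - t) / \<epsilon>) * g t / \<epsilon>\<^sup>2)) \<le> Pm * B / \<epsilon>\<^sup>2 * (b - a)"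
  proof (rule integral_bound)
    show "a \<le> b"
      unfolding a_def b_def using \<epsilon> R_nonneg by simp
    show "continuous_on {a..b} (\<lambda>t. deriv \<phi> ((x0 - t) / \<epsilon>) * g t / \<epsilon>\<^sup>2)"
      using \<epsilon> by (intro continuous_intros continuous_on_compose2[OF continuous_deriv]
          continuous_on_compose2[OF g]) auto
    have "\<bar>deriv \<phi> ((x0 - t) / \<epsilon>)\<bar> * \<bar>g t\<bar> \<le> Pm * B" for t
      using abs_deriv_le g_le Pm_nonneg by (intro mult_mono) auto
    then show "norm (deriv \<phi> ((x0 - t) / \<epsilon>) * g t / \<epsilon>\<^sup>2) \<le> Pm * B / \<epsilon>\<^sup>2" for t
      by (simp add: abs_mult divide_right_mono)
  qed
  moreover have "b - a = 2 + 2 * \<epsilon> * R"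
    unfolding a_def b_def by simp
  ultimately show ?thesis
    using mollify_has_derivative[OF \<epsilon> g, of x0] unfolding a_def b_def
    by (intro exI[of _ "integral {a..b} (\<lambda>t. deriv \<phi> ((x0 - t) / \<epsilon>) * g t / \<epsilon>\<^sup>2)"])
      (simp add: a_def b_def mult_ac)
qed

end

section \<open>The discrete Hamilton--Jacobi--Bellman equation\<close>

definition hjb_time :: "real \<Rightarrow> real \<Rightarrow> nat \<Rightarrow> real" where
  "hjb_time T h j = real (gridN T h - Suc j) * h"

definition hjb_objective :: "real \<Rightarrow> real \<Rightarrow> real \<Rightarrow> (real \<Rightarrow> real) \<Rightarrow> (real \<Rightarrow> real measure \<Rightarrow> real)
    \<Rightarrow> (real \<Rightarrow> real measure \<Rightarrow> real) \<Rightarrow> (real \<Rightarrow> real measure) \<Rightarrow> nat \<Rightarrow> int \<Rightarrow> real \<Rightarrow> real" where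
  "hjb_objective \<rho> h T \<sigma> F G \<mu> j i \<alpha> =
     (interp \<rho> (hjb \<rho> h T \<sigma> F G \<mu> j) (of_int i * \<rho> - h * \<alpha> + sqrt h * \<sigma> (hjb_time T h j))
      + interp \<rho> (hjb \<rho> h T \<sigma> F G \<mu> j) (of_int i * \<rho> - h * \<alpha> - sqrt h * \<sigma> (hjb_time T h j))) / 2
     + h * \<alpha>\<^sup>2 / 2 + h * F (of_int i * \<rho>) (\<mu> (hjb_time T h j))"

lemma hjb_Suc_eq_INF: "hjb \<rho> h T \<sigma> F G \<mu> (Suc j) i = (INF \<alpha>. hjb_objective \<rho> h T \<sigma> F G \<mu> j i \<alpha>)"
  by (simp add: hjb_objective_def hjb_time_def Let_def)

lemma gridN_mult_le:
  assumes "0 < h" "0 \<le> T"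
  shows "real (gridN T h) * h \<le> T"
proof -
  have "real (gridN T h) = of_int \<lfloor>T / h\<rfloor>"
    unfolding gridN_def using assms by simp
  also have "\<dots> \<le> T / h"
    by simp
  finally show ?thesis
    using assms(1) by (simp add: le_divide_eq)
qed

lemma INF_second_diff_le:
  fixes a b c :: "'a \<Rightarrow> real"
  assumes "bdd_below (range a)" "bdd_below (range b)" "\<And>x. a x + b x - 2 * c x \<le> S"
  shows "(INF x. a x) + (INF x. b x) - 2 * (INF x. c x) \<le> S"
proof -
  have "((INF x. a x) + (INF x. b x) - S) / 2 \<le> (INF x. c x)"
  proof (rule cINF_greatest)
    show "((INF x. a x) + (INF x. b x) - S) / 2 \<le> c x" for x
      using cINF_lower[OF assms(1), of x] cINF_lower[OF assms(2), of x] assms(3)[of x] by simp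
  qed simp
  then show ?thesis by simp
qed

locale hjb_data =
  fixes \<rho> h T :: real and \<sigma> :: "real \<Rightarrow> real" and F G :: "real \<Rightarrow> real measure \<Rightarrow> real" and K :: real
  assumes mesh_pos: "0 < \<rho>" and step_pos: "0 < h" and horizon_nonneg: "0 \<le> T" and K_nonneg: "0 \<le> K"
    and data_bounds: "\<And>m. m \<in> P1 \<Longrightarrow> (\<forall>x. \<bar>F x m\<bar> \<le> K \<and> \<bar>G x m\<bar> \<le> K)
      \<and> C2_bdd (\<lambda>x. F x m) K \<and> C2_bdd (\<lambda>x. G x m) K"
begin

abbreviation V :: "(real \<Rightarrow> real measure) \<Rightarrow> nat \<Rightarrow> int \<Rightarrow> real" where
  "V \<mu> \<equiv> hjb \<rho> h T \<sigma> F G \<mu>"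

abbreviation objective :: "(real \<Rightarrow> real measure) \<Rightarrow> nat \<Rightarrow> int \<Rightarrow> real \<Rightarrow> real" where
  "objective \<mu> \<equiv> hjb_objective \<rho> h T \<sigma> F G \<mu>"

lemma hjb_time_mem: "hjb_time T h j \<in> {0..T}"
proof -
  have "real (gridN T h - Suc j) * h \<le> real (gridN T h) * h"
    using step_pos by (intro mult_right_mono) auto
  also have "\<dots> \<le> T"
    by (rule gridN_mult_le[OF step_pos horizon_nonneg])
  finally show ?thesis
    using step_pos unfolding hjb_time_def by simp
qed

context
  fixes \<mu> :: "real \<Rightarrow> real measure"
  assumes \<mu>_P1: "\<mu> ` {0..T} \<subseteq> P1"
begin

lemma F_bounds: "\<bar>F x (\<mu> (hjb_time T h j))\<bar> \<le> K" "C2_bdd (\<lambda>x. F x (\<mu> (hjb_time T h j))) K"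
  using data_bounds \<mu>_P1 hjb_time_mem by blast+

lemma G_bounds: "\<bar>G x (\<mu> T)\<bar> \<le> K" "C2_bdd (\<lambda>x. G x (\<mu> T)) K"
proof -
  have "\<mu> T \<in> P1"
    using \<mu>_P1 horizon_nonneg by auto
  then show "\<bar>G x (\<mu> T)\<bar> \<le> K" "C2_bdd (\<lambda>x. G x (\<mu> T)) K"
    using data_bounds by blast+
qed

lemma objective_bounds:
  assumes "\<And>i. \<bar>V \<mu> j i\<bar> \<le> B"
  shows "- B - h * K \<le> objective \<mu> j i \<alpha>" "objective \<mu> j i 0 \<le> B + h * K"
proof -
  define w where "w = interp \<rho> (V \<mu> j)"
  define s where "s = sqrt h * \<sigma> (hjb_time T h j)"
  define f where "f = F (of_int i * \<rho>) (\<mu> (hjb_time T h j))"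
  have objective: "objective \<mu> j i a = (w (of_int i * \<rho> - h * a + s) + w (of_int i * \<rho> - h * a - s)) / 2
      + h * a\<^sup>2 / 2 + h * f" for a
    unfolding hjb_objective_def w_def s_def f_def ..
  have bound: "\<bar>w y\<bar> \<le> B" for y
    unfolding w_def by (rule abs_interp_le[OF mesh_pos assms])
  have "\<bar>h * f\<bar> \<le> h * K"
    unfolding f_def using F_bounds(1) step_pos by (simp add: abs_mult mult_left_mono)
  moreover have "0 \<le> h * \<alpha>\<^sup>2 / 2"
    using step_pos by simp
  moreover note bound[of "of_int i * \<rho> - h * \<alpha> + s"] bound[of "of_int i * \<rho> - h * \<alpha> - s"]
    bound[of "of_int i * \<rho> + s"] bound[of "of_int i * \<rho> - s"]
  ultimately show "- B - h * K \<le> objective \<mu> j i \<alpha>" "objective \<mu> j i 0 \<le> B + h * K"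
    unfolding objective by (simp_all add: abs_le_iff) argo+
qed

lemma abs_V_le: "\<bar>V \<mu> j i\<bar> \<le> K * (1 + real j * h)"
proof (induction j arbitrary: i)
  case 0
  then show ?case using G_bounds by simp
next
  case (Suc j)
  define B where "B = K * (1 + real j * h)"
  have lower: "- B - h * K \<le> objective \<mu> j i \<alpha>" for \<alpha>
    unfolding B_def by (rule objective_bounds(1)) (rule Suc.IH)
  then have "- B - h * K \<le> (INF \<alpha>. objective \<mu> j i \<alpha>)"
    by (intro cINF_greatest) auto
  moreover have "(INF \<alpha>. objective \<mu> j i \<alpha>) \<le> objective \<mu> j i 0"
    using lower by (intro cINF_lower bdd_belowI2) auto
  moreover have "objective \<mu> j i 0 \<le> B + h * K"
    unfolding B_def by (rule objective_bounds(2)) (rule Suc.IH)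
  ultimately show ?case
    unfolding hjb_Suc_eq_INF B_def by (simp add: abs_le_iff algebra_simps)
qed

lemma bdd_below_objective: "bdd_below (range (objective \<mu> j i))"
  by (rule bdd_belowI2, rule objective_bounds(1), rule abs_V_le)

lemma objective_second_diff_le:
  assumes "\<And>i. V \<mu> j (i + 1) + V \<mu> j (i - 1) - 2 * V \<mu> j i \<le> S"
  shows "objective \<mu> j (i + 1) \<alpha> + objective \<mu> j (i - 1) \<alpha> - 2 * objective \<mu> j i \<alpha> \<le> S + h * K * \<rho>\<^sup>2"
proof -
  define y1 where "y1 = of_int i * \<rho> - h * \<alpha> + sqrt h * \<sigma> (hjb_time T h j)"
  define y2 where "y2 = of_int i * \<rho> - h * \<alpha> - sqrt h * \<sigma> (hjb_time T h j)"
  define f where "f x = F x (\<mu> (hjb_time T h j))" for x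
  define w where "w = interp \<rho> (V \<mu> j)"
  have w: "w (y + \<rho>) + w (y - \<rho>) - 2 * w y \<le> S" for y
    unfolding w_def using mesh_pos assms by (rule interp_second_diff_le)
  have f: "h * (f (of_int i * \<rho> + \<rho>) + f (of_int i * \<rho> - \<rho>) - 2 * f (of_int i * \<rho>)) \<le> h * K * \<rho>\<^sup>2"
    unfolding f_def mult.assoc using C2_bdd_second_diff_le[OF F_bounds(2)] mesh_pos step_pos
    by (intro mult_left_mono) auto
  have "objective \<mu> j (i + 1) \<alpha> + objective \<mu> j (i - 1) \<alpha> - 2 * objective \<mu> j i \<alpha>
      = ((w (y1 + \<rho>) + w (y1 - \<rho>) - 2 * w y1) + (w (y2 + \<rho>) + w (y2 - \<rho>) - 2 * w y2)) / 2
        + h * (f (of_int i * \<rho> + \<rho>) + f (of_int i * \<rho> - \<rho>) - 2 * f (of_int i * \<rho>))"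
    unfolding hjb_objective_def y1_def y2_def f_def w_def by (simp add: algebra_simps) argo
  then show ?thesis
    using w[of y1] w[of y2] f by argo
qed

lemma V_second_diff_le: "V \<mu> j (i + 1) + V \<mu> j (i - 1) - 2 * V \<mu> j i \<le> K * \<rho>\<^sup>2 * (1 + real j * h)"
proof (induction j arbitrary: i)
  case 0
  have "of_int (i + 1) * \<rho> = of_int i * \<rho> + \<rho>" "of_int (i - 1) * \<rho> = of_int i * \<rho> - \<rho>"
    by (simp_all add: algebra_simps)
  with C2_bdd_second_diff_le[OF G_bounds(2), of \<rho> "of_int i * \<rho>"] mesh_pos show ?case
    unfolding hjb.simps by (simp only:) simp
next
  case (Suc j)
  have "objective \<mu> j (i + 1) \<alpha> + objective \<mu> j (i - 1) \<alpha> - 2 * objective \<mu> j i \<alpha>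
      \<le> K * \<rho>\<^sup>2 * (1 + real j * h) + h * K * \<rho>\<^sup>2" for \<alpha>
    by (rule objective_second_diff_le) (rule Suc.IH)
  then have "V \<mu> (Suc j) (i + 1) + V \<mu> (Suc j) (i - 1) - 2 * V \<mu> (Suc j) i
      \<le> K * \<rho>\<^sup>2 * (1 + real j * h) + h * K * \<rho>\<^sup>2"
    unfolding hjb_Suc_eq_INF by (rule INF_second_diff_le[OF bdd_below_objective bdd_below_objective])
  also have "K * \<rho>\<^sup>2 * (1 + real j * h) + h * K * \<rho>\<^sup>2 = K * \<rho>\<^sup>2 * (1 + real (Suc j) * h)"
    by (simp add: algebra_simps)
  finally show ?case .
qed

end

end

lemma three_tents_le:
  fixes u v w d :: real
  assumes "d \<le> 1" "u + d \<le> v" "v + d \<le> w"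
  shows "max 0 (1 - \<bar>u\<bar>) + max 0 (1 - \<bar>v\<bar>) + max 0 (1 - \<bar>w\<bar>) \<le> 3 - 2 * d"
  using assms by (auto simp: max_def abs_if split: if_splits)

lemma three_consecutive_hats_le:
  fixes \<Psi> :: "int \<Rightarrow> real"
  assumes \<rho>: "0 < \<rho>" and gaps: "\<And>j. \<delta> \<le> \<Psi> (j + 1) - \<Psi> j" and "\<delta> / \<rho> \<le> 1"
  shows "hat \<rho> i (\<Psi> j) + hat \<rho> i (\<Psi> (j + 1)) + hat \<rho> i (\<Psi> (j + 2)) \<le> 3 - 2 * (\<delta> / \<rho>)"
proof -
  have "(\<Psi> j - of_int i * \<rho>) / \<rho> + \<delta> / \<rho> \<le> (\<Psi> (j + 1) - of_int i * \<rho>) / \<rho>"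
    "(\<Psi> (j + 1) - of_int i * \<rho>) / \<rho> + \<delta> / \<rho> \<le> (\<Psi> (j + 2) - of_int i * \<rho>) / \<rho>"
    using gaps[of j] gaps[of "j + 1"] \<rho>
    by (simp_all add: add_divide_distrib[symmetric] divide_right_mono add.assoc)
  from three_tents_le[OF assms(3) this] show ?thesis
    unfolding hat_def using \<rho> by (simp add: abs_divide)
qed

lemma hat_index_gap_le:
  fixes \<Psi> :: "int \<Rightarrow> real"
  assumes \<rho>: "0 < \<rho>" and gaps: "\<And>j. \<delta> \<le> \<Psi> (j + 1) - \<Psi> j" and "2 * \<rho> / 3 \<le> \<delta>" and "j1 \<le> j"
    and "hat \<rho> i (\<Psi> j1) \<noteq> 0" "hat \<rho> i (\<Psi> j) \<noteq> 0"
  shows "j \<le> j1 + 2"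
proof (rule ccontr)
  assume "\<not> j \<le> j1 + 2"
  then have "3 * \<delta> \<le> of_int (j - j1) * \<delta>"
    using assms(3) \<rho> by (intro mult_right_mono) auto
  moreover have "\<Psi> j1 + of_int (j - j1) * \<delta> \<le> \<Psi> j"
    using gaps \<open>j1 \<le> j\<close> by (rule int_increments_ge_imp)
  moreover have "\<bar>\<Psi> j1 - of_int i * \<rho>\<bar> < \<rho>" "\<bar>\<Psi> j - of_int i * \<rho>\<bar> < \<rho>"
    using hat_neq_0_imp_near[OF \<rho>] assms(5,6) by blast+
  ultimately show False
    using assms(3) by (simp add: abs_less_iff)
qed

lemma sum_hat_le_of_increments:
  fixes \<Psi> :: "int \<Rightarrow> real"
  assumes \<rho>: "0 < \<rho>" and gaps: "\<And>j. \<delta> \<le> \<Psi> (j + 1) - \<Psi> j" and "2 * \<rho> / 3 \<le> \<delta>" "\<delta> \<le> \<rho>"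
    and "finite J"
  shows "(\<Sum>j\<in>J. hat \<rho> i (\<Psi> j)) \<le> 3 - 2 * (\<delta> / \<rho>)"
proof -
  define P where "P = {j\<in>J. hat \<rho> i (\<Psi> j) \<noteq> 0}"
  have "finite P"
    using \<open>finite J\<close> unfolding P_def by simp
  have sum_P: "(\<Sum>j\<in>J. hat \<rho> i (\<Psi> j)) = (\<Sum>j\<in>P. hat \<rho> i (\<Psi> j))"
    unfolding P_def by (rule sum.mono_neutral_right[OF \<open>finite J\<close>]) auto
  have "\<delta> / \<rho> \<le> 1"
    using assms by simp
  show ?thesis
  proof (cases "P = {}")
    case True
    then show ?thesis
      using sum_P \<open>\<delta> / \<rho> \<le> 1\<close> by simp
  next
    case False
    define j1 where "j1 = Min P"
    have "j1 \<in> P"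
      unfolding j1_def using \<open>finite P\<close> False by simp
    have P_sub: "P \<subseteq> {j1, j1 + 1, j1 + 2}"
    proof
      fix j assume "j \<in> P"
      then have "j1 \<le> j"
        unfolding j1_def using \<open>finite P\<close> by simp
      moreover have "j \<le> j1 + 2"
        using hat_index_gap_le[where \<Psi>=\<Psi>, OF \<rho> gaps assms(3) \<open>j1 \<le> j\<close>] \<open>j1 \<in> P\<close> \<open>j \<in> P\<close>
        unfolding P_def by blast
      ultimately show "j \<in> {j1, j1 + 1, j1 + 2}"
        by auto
    qed
    have "(\<Sum>j\<in>P. hat \<rho> i (\<Psi> j)) \<le> (\<Sum>j\<in>{j1, j1 + 1, j1 + 2}. hat \<rho> i (\<Psi> j))"
      by (rule sum_mono2[OF _ P_sub]) (auto simp: hat_nonneg)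
    also have "\<dots> = hat \<rho> i (\<Psi> j1) + hat \<rho> i (\<Psi> (j1 + 1)) + hat \<rho> i (\<Psi> (j1 + 2))"
      by simp
    also have "\<dots> \<le> 3 - 2 * (\<delta> / \<rho>)"
      using \<rho> gaps \<open>\<delta> / \<rho> \<le> 1\<close> by (rule three_consecutive_hats_le)
    finally show ?thesis
      using sum_P by simp
  qed
qed

lemma hat_neq_0_imp_index_near:
  assumes "0 < \<rho>" "\<bar>\<Psi> j - of_int j * \<rho>\<bar> \<le> D" "hat \<rho> i (\<Psi> j) \<noteq> 0"
  shows "j \<in> {i - (\<lceil>D / \<rho>\<rceil> + 1) .. i + (\<lceil>D / \<rho>\<rceil> + 1)}"
proof -
  have "\<bar>of_int (j - i) * \<rho>\<bar> < \<rho> + D"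
    using hat_neq_0_imp_near[OF assms(1,3)] assms(2) by (simp add: algebra_simps)
  then have "\<bar>of_int (j - i)\<bar> < (\<rho> + D) / \<rho>"
    using assms(1) by (simp add: abs_mult pos_less_divide_eq)
  also have "(\<rho> + D) / \<rho> = 1 + D / \<rho>"
    using assms(1) by (simp add: add_divide_distrib)
  moreover have "D / \<rho> \<le> of_int \<lceil>D / \<rho>\<rceil>"
    by simp
  ultimately have "\<bar>j - i\<bar> < \<lceil>D / \<rho>\<rceil> + 1"
    by linarith
  then show ?thesis
    by auto
qed

lemma sum_hat_le_of_drift:
  assumes "0 < \<rho>" "\<And>j. \<bar>\<Psi> j - of_int j * \<rho>\<bar> \<le> D" "finite J"
  shows "(\<Sum>j\<in>J. hat \<rho> i (\<Psi> j)) \<le> of_int (2 * \<lceil>D / \<rho>\<rceil> + 3)"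
proof -
  define r where "r = \<lceil>D / \<rho>\<rceil> + 1"
  have "0 \<le> D"
    using assms(2)[of 0] by linarith
  then have "0 \<le> D / \<rho>"
    using assms(1) by simp
  then have "0 \<le> r"
    unfolding r_def by linarith
  have "hat \<rho> i (\<Psi> j) \<noteq> 0 \<Longrightarrow> j \<in> {i - r..i + r}" for j
    unfolding r_def by (rule hat_neq_0_imp_index_near[OF assms(1) assms(2)])
  then have "(\<Sum>j\<in>J. hat \<rho> i (\<Psi> j)) = (\<Sum>j\<in>J \<inter> {i - r..i + r}. hat \<rho> i (\<Psi> j))"
    by (intro sum.mono_neutral_right[OF assms(3)]) auto
  also have "\<dots> \<le> (\<Sum>j\<in>J \<inter> {i - r..i + r}. 1)"
    by (rule sum_mono) (simp add: hat_le_1[OF assms(1)])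
  also have "\<dots> \<le> card {i - r..i + r}"
    using card_mono[of "{i - r..i + r}" "J \<inter> {i - r..i + r}"] by simp
  also have "\<dots> = of_int (2 * \<lceil>D / \<rho>\<rceil> + 3)"
    using \<open>0 \<le> r\<close> unfolding r_def by simp
  finally show ?thesis .
qed

lemma transport_step_bounds:
  fixes \<Psi>p \<Psi>m m :: "int \<Rightarrow> real"
  assumes \<rho>: "0 < \<rho>" and m: "\<And>j. 0 \<le> m j \<and> m j \<le> M"
    and drift: "\<And>j. \<bar>\<Psi>p j - of_int j * \<rho>\<bar> \<le> D" "\<And>j. \<bar>\<Psi>m j - of_int j * \<rho>\<bar> \<le> D"
    and sums: "\<And>J. finite J \<Longrightarrow> (\<Sum>j\<in>J. hat \<rho> i (\<Psi>p j)) \<le> A"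
      "\<And>J. finite J \<Longrightarrow> (\<Sum>j\<in>J. hat \<rho> i (\<Psi>m j)) \<le> A"
  defines "m' \<equiv> (1 / 2) * infsum (\<lambda>j. (hat \<rho> i (\<Psi>p j) + hat \<rho> i (\<Psi>m j)) * m j) UNIV"
  shows "0 \<le> m' \<and> m' \<le> A * M"
proof -
  define I where "I = {i - (\<lceil>D / \<rho>\<rceil> + 1) .. i + (\<lceil>D / \<rho>\<rceil> + 1)}"
  have "finite I"
    unfolding I_def by simp
  have "hat \<rho> i (\<Psi>p j) = 0 \<and> hat \<rho> i (\<Psi>m j) = 0" if "j \<notin> I" for j
    using that hat_neq_0_imp_index_near[where \<Psi>=\<Psi>p, OF \<rho> drift(1)]
      hat_neq_0_imp_index_near[where \<Psi>=\<Psi>m, OF \<rho> drift(2)]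
    unfolding I_def by blast
  then have "infsum (\<lambda>j. (hat \<rho> i (\<Psi>p j) + hat \<rho> i (\<Psi>m j)) * m j) UNIV
      = infsum (\<lambda>j. (hat \<rho> i (\<Psi>p j) + hat \<rho> i (\<Psi>m j)) * m j) I"
    by (intro infsum_cong_neutral) auto
  then have m': "m' = (1 / 2) * (\<Sum>j\<in>I. (hat \<rho> i (\<Psi>p j) + hat \<rho> i (\<Psi>m j)) * m j)"
    unfolding m'_def using \<open>finite I\<close> by simp
  have "0 \<le> M"
    using m[of 0] by linarith
  have "(\<Sum>j\<in>I. (hat \<rho> i (\<Psi>p j) + hat \<rho> i (\<Psi>m j)) * m j) \<le> (\<Sum>j\<in>I. (hat \<rho> i (\<Psi>p j) + hat \<rho> i (\<Psi>m j)) * M)"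
    using m by (intro sum_mono mult_left_mono) (auto simp: hat_nonneg add_nonneg_nonneg)
  also have "\<dots> = ((\<Sum>j\<in>I. hat \<rho> i (\<Psi>p j)) + (\<Sum>j\<in>I. hat \<rho> i (\<Psi>m j))) * M"
    by (simp add: sum.distrib sum_distrib_right[symmetric])
  also have "\<dots> \<le> (A + A) * M"
    using sums[OF \<open>finite I\<close>] \<open>0 \<le> M\<close> by (intro mult_right_mono) auto
  finally have "m' \<le> A * M"
    unfolding m' by simp
  moreover have "0 \<le> m'"
    unfolding m' using m by (auto intro!: sum_nonneg simp: hat_nonneg)
  ultimately show ?thesis by simp
qed

lemma sum_cells_bounds:
  fixes f :: "int \<Rightarrow> real" and \<rho> x :: real
  assumes \<rho>: "0 < \<rho>" and f: "\<And>i. 0 \<le> f i \<and> f i \<le> M"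
  defines "s \<equiv> infsum (\<lambda>i. f i * indicator {of_int i * \<rho> - \<rho> / 2 .. of_int i * \<rho> + \<rho> / 2} x) UNIV"
  shows "0 \<le> s \<and> s \<le> 3 * M"
proof -
  define i0 where "i0 = \<lfloor>x / \<rho>\<rfloor>"
  define E where "E i = {of_int i * \<rho> - \<rho> / 2 .. of_int i * \<rho> + \<rho> / 2}" for i
  have cells: "i \<in> {i0 - 1..i0 + 1}" if "x \<in> E i" for i
  proof -
    have "(of_int i - 1/2) * \<rho> \<le> x" "x \<le> (of_int i + 1/2) * \<rho>"
      using that unfolding E_def by (auto simp: algebra_simps)
    then have "of_int i - 1/2 \<le> x / \<rho>" "x / \<rho> \<le> of_int i + 1/2"
      using \<rho> by (simp_all add: pos_le_divide_eq pos_divide_le_eq)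
    moreover have "of_int i0 \<le> x / \<rho>" "x / \<rho> < of_int i0 + 1"
      unfolding i0_def by linarith+
    ultimately have "i0 - 1 < i" "i < i0 + 2"
      by linarith+
    then show ?thesis by simp
  qed
  have "s = infsum (\<lambda>i. f i * indicator (E i) x) {i0 - 1..i0 + 1}"
    unfolding s_def E_def[symmetric] using cells by (intro infsum_cong_neutral) (auto simp: indicator_def)
  then have s: "s = (\<Sum>i\<in>{i0 - 1..i0 + 1}. f i * indicator (E i) x)"
    by simp
  have "0 \<le> M"
    using f[of 0] by linarith
  have "(\<Sum>i\<in>{i0 - 1..i0 + 1}. f i * indicator (E i) x) \<le> (\<Sum>i\<in>{i0 - 1..i0 + 1}. M)"
    using f \<open>0 \<le> M\<close> by (intro sum_mono) (auto simp: indicator_def order_trans)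
  moreover have "0 \<le> (\<Sum>i\<in>{i0 - 1..i0 + 1}. f i * indicator (E i) x)"
    using f by (intro sum_nonneg) simp
  ultimately show ?thesis
    unfolding s by simp
qed

lemma measure_density_interval_le:
  assumes "m0 = density lborel (\<lambda>x. ennreal (f0 x))" "f0 \<in> borel_measurable borel"
    and "AE x in lborel. f0 x \<le> B" "0 \<le> B" "a \<le> b"
  shows "measure m0 {a..b} \<le> B * (b - a)"
proof -
  have "emeasure m0 {a..b} = (\<integral>\<^sup>+ x. ennreal (f0 x) * indicator {a..b} x \<partial>lborel)"
    unfolding assms(1) using assms(2) by (subst emeasure_density) auto
  also have "\<dots> \<le> (\<integral>\<^sup>+ x. ennreal B * indicator {a..b} x \<partial>lborel)"
    using assms(3)
    by (intro nn_integral_mono_AE) (auto elim!: eventually_mono intro: mult_right_mono ennreal_leI simp: indicator_def)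
  also have "\<dots> = ennreal (B * (b - a))"
    using assms(4,5) by (simp add: nn_integral_cmult_indicator ennreal_mult)
  finally have "emeasure m0 {a..b} \<le> ennreal (B * (b - a))" .
  then show ?thesis
    using assms(4,5) by (simp add: measure_def enn2real_leI)
qed

section \<open>The discrete Fokker--Planck equation\<close>

lemma veps_grid_eq:
  "0 < h \<Longrightarrow> veps \<phi> \<epsilon> \<rho> h T \<sigma> F G \<mu> x (real k * h)
    = mollify \<phi> \<epsilon> (interp \<rho> (hjb \<rho> h T \<sigma> F G \<mu> (gridN T h - k))) x"
  by (simp add: veps_def vdisc_def vgrid_def mollify_def)

lemma abs_convex_comb_le:
  fixes u v a B :: real
  assumes "0 \<le> a" "a \<le> 1" "\<bar>u\<bar> \<le> B" "\<bar>v\<bar> \<le> B"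
  shows "\<bar>a * u + (1 - a) * v\<bar> \<le> B"
proof -
  have "a * u + (1 - a) * v \<le> B" "a * (- u) + (1 - a) * (- v) \<le> B"
    using assms by (intro convex_bound_le; simp add: abs_le_iff)+
  then show ?thesis by simp
qed

locale mfg_scheme = hjb_data + mollifier_kernel +
  fixes \<epsilon> S\<sigma> B0 :: real and m0 :: "real measure" and f0 :: "real \<Rightarrow> real"
  assumes \<epsilon>_pos: "0 < \<epsilon>"
    and grid_exact: "real (gridN T h) * h = T"
    and \<sigma>_bound: "\<And>t. t \<in> {0..T} \<Longrightarrow> \<bar>\<sigma> t\<bar> \<le> S\<sigma>"
    and m0_density: "m0 = density lborel (\<lambda>x. ennreal (f0 x))"
    and f0_measurable: "f0 \<in> borel_measurable borel"
    and f0_bound: "AE x in lborel. f0 x \<le> B0"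
    and B0_nonneg: "0 \<le> B0"
begin

abbreviation grad :: "(real \<Rightarrow> real measure) \<Rightarrow> nat \<Rightarrow> real \<Rightarrow> real" where
  "grad \<mu> k \<equiv> deriv (\<lambda>z. veps \<phi> \<epsilon> \<rho> h T \<sigma> F G \<mu> z (real k * h))"

abbreviation mass :: "(real \<Rightarrow> real measure) \<Rightarrow> nat \<Rightarrow> int \<Rightarrow> real" where
  "mass \<mu> \<equiv> fp \<phi> \<epsilon> \<rho> h T \<sigma> F G m0 \<mu>"

definition grad_bound :: real where
  "grad_bound = (2 + 2 * \<epsilon> * R) * Pm * (K * (1 + T)) / \<epsilon>\<^sup>2"

definition drift :: real where
  "drift = h * grad_bound + sqrt h * S\<sigma>"

text \<open>Growth factor of the discrete masses in one step of the Fokker--Planck scheme: the sharp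
  bound once the step is small, a crude counting bound otherwise.\<close>
definition growth :: real where
  "growth = (if K * (1 + T) * h \<le> 1 / 3 then 1 + 2 * K * (1 + T) * h
     else of_int (2 * \<lceil>drift / \<rho>\<rceil> + 3))"

definition density_bound :: real where
  "density_bound = 3 * growth ^ (gridN T h + 1) * B0"

lemma grad_bound_nonneg: "0 \<le> grad_bound"
  unfolding grad_bound_def using \<epsilon>_pos R_nonneg Pm_nonneg K_nonneg horizon_nonneg by simp

lemma S\<sigma>_nonneg: "0 \<le> S\<sigma>"
  using \<sigma>_bound[of 0] horizon_nonneg by force

lemma growth_ge_1: "1 \<le> growth"
proof -
  have "0 \<le> drift / \<rho>"
    unfolding drift_def using grad_bound_nonneg S\<sigma>_nonneg step_pos mesh_pos by simp
  then show ?thesis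
    unfolding growth_def using K_nonneg horizon_nonneg step_pos by simp
qed

lemma characteristic_drift_le:
  assumes "\<And>x. \<bar>v x\<bar> \<le> grad_bound" "\<bar>s\<bar> \<le> sqrt h * S\<sigma>"
  shows "\<bar>(of_int j * \<rho> - h * v (of_int j * \<rho>) + s) - of_int j * \<rho>\<bar> \<le> drift"
proof -
  have "\<bar>h * v (of_int j * \<rho>)\<bar> \<le> h * grad_bound"
    using assms(1) step_pos by (simp add: abs_mult mult_left_mono)
  then show ?thesis
    unfolding drift_def using assms(2) by linarith
qed

text \<open>The characteristics \<open>x\<^sub>j \<mapsto> x\<^sub>j - h v(x\<^sub>j) + s\<close> are almost increasing because \<open>v\<close>, the
  derivative of a semiconcave function, has increments bounded above.\<close>
lemma sum_hat_characteristic_le: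
  assumes v: "\<And>x. \<bar>v x\<bar> \<le> grad_bound" "\<And>x. v (x + \<rho>) - v x \<le> K * (1 + T) * \<rho>"
    and s: "\<bar>s\<bar> \<le> sqrt h * S\<sigma>" and "finite J"
  shows "(\<Sum>j\<in>J. hat \<rho> i (of_int j * \<rho> - h * v (of_int j * \<rho>) + s)) \<le> growth"
proof (cases "K * (1 + T) * h \<le> 1 / 3")
  case True
  define \<delta> where "\<delta> = \<rho> - h * (K * (1 + T) * \<rho>)"
  have "(\<Sum>j\<in>J. hat \<rho> i (of_int j * \<rho> - h * v (of_int j * \<rho>) + s)) \<le> 3 - 2 * (\<delta> / \<rho>)"
  proof (rule sum_hat_le_of_increments[OF mesh_pos _ _ _ \<open>finite J\<close>])
    fix j
    have "h * (v (of_int j * \<rho> + \<rho>) - v (of_int j * \<rho>)) \<le> h * (K * (1 + T) * \<rho>)"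
      using v(2) step_pos by (intro mult_left_mono) auto
    then show "\<delta> \<le> (of_int (j + 1) * \<rho> - h * v (of_int (j + 1) * \<rho>) + s)
        - (of_int j * \<rho> - h * v (of_int j * \<rho>) + s)"
      unfolding \<delta>_def by (simp add: algebra_simps)
  next
    have "K * (1 + T) * h * \<rho> \<le> 1 / 3 * \<rho>"
      using True mesh_pos by (intro mult_right_mono) auto
    then show "2 * \<rho> / 3 \<le> \<delta>"
      unfolding \<delta>_def by (simp add: algebra_simps)
    show "\<delta> \<le> \<rho>"
      unfolding \<delta>_def using step_pos K_nonneg horizon_nonneg mesh_pos by simp
  qed
  also have "3 - 2 * (\<delta> / \<rho>) = growth"
    unfolding growth_def \<delta>_def using True mesh_pos by (simp add: field_simps)
  finally show ?thesis .
next
  case False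
  then show ?thesis
    unfolding growth_def
    using sum_hat_le_of_drift[OF mesh_pos characteristic_drift_le[OF v(1) s] \<open>finite J\<close>] by simp
qed

context
  fixes \<mu> :: "real \<Rightarrow> real measure"
  assumes \<mu>_P1: "\<mu> ` {0..T} \<subseteq> P1"
begin

lemma mollified_value_has_deriv:
  assumes "real j * h \<le> T"
  shows "\<exists>D. (mollify \<phi> \<epsilon> (interp \<rho> (V \<mu> j)) has_real_derivative D) (at x) \<and> \<bar>D\<bar> \<le> grad_bound"
proof -
  have "K * (1 + real j * h) \<le> K * (1 + T)"
    using assms K_nonneg by (intro mult_left_mono) auto
  then have "\<bar>V \<mu> j i\<bar> \<le> K * (1 + T)" for i
    using abs_V_le[OF \<mu>_P1, where j=j and i=i] by linarith
  then show ?thesis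
    unfolding grad_bound_def
    by (intro mollify_deriv_bound[OF \<epsilon>_pos continuous_on_interp[OF mesh_pos]] abs_interp_le[OF mesh_pos])
qed

lemma deriv_mollified_value_diff_le:
  assumes "real j * h \<le> T"
  defines "u \<equiv> mollify \<phi> \<epsilon> (interp \<rho> (V \<mu> j))"
  shows "deriv u (x + \<rho>) - deriv u x \<le> K * (1 + T) * \<rho>"
proof -
  define w where "w = interp \<rho> (V \<mu> j)"
  obtain D1 D2 where D1: "(u has_real_derivative D1) (at x)" and D2: "(u has_real_derivative D2) (at (x + \<rho>))"
    using mollified_value_has_deriv[OF assms(1)] unfolding u_def by blast
  have "K * (1 + real j * h) * (\<rho> * \<rho>) \<le> K * (1 + T) * (\<rho> * \<rho>)"
    using assms(1) K_nonneg by (intro mult_right_mono mult_left_mono) auto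
  then have "K * \<rho>\<^sup>2 * (1 + real j * h) \<le> K * (1 + T) * \<rho> * \<rho>"
    by (simp add: power2_eq_square algebra_simps)
  then have "(V \<mu> j (i + 1 + 1) - V \<mu> j (i + 1)) - (V \<mu> j (i + 1) - V \<mu> j i) \<le> K * (1 + T) * \<rho> * \<rho>" for i
    using V_second_diff_le[OF \<mu>_P1, where j=j and i="i + 1"] by simp
  then have w_slope: "(w (y' + \<rho>) - w y') - (w (y + \<rho>) - w y) \<le> K * (1 + T) * \<rho> * (y' - y)"
    if "y \<le> y'" for y y'
    unfolding w_def interp_add_mesh[OF mesh_pos] interp_diff[OF mesh_pos]
    by (intro interp_increment_le[OF mesh_pos _ that])
  have w_cont: "continuous_on UNIV w"
    unfolding w_def by (rule continuous_on_interp[OF mesh_pos])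
  have u_slope: "(u (y + \<rho>) - u y) - (u (x + \<rho>) - u x) \<le> K * (1 + T) * \<rho> * (y - x)" if "x \<le> y" for y
    unfolding u_def w_def[symmetric] using w_cont w_slope that by (rule mollify_increment_diff_le[OF \<epsilon>_pos])
  have "((\<lambda>y. u (y + \<rho>) - u y) has_real_derivative D2 - D1) (at x)"
    using DERIV_shift[THEN iffD1, OF D2] D1 by (rule DERIV_diff)
  then have "D2 - D1 \<le> K * (1 + T) * \<rho>"
    by (rule DERIV_le_of_increments_le) (meson less_imp_le u_slope)
  then show ?thesis
    using DERIV_imp_deriv[OF D1] DERIV_imp_deriv[OF D2] by simp
qed

lemma grad_bounds:
  assumes "k \<le> gridN T h"
  shows "\<bar>grad \<mu> k x\<bar> \<le> grad_bound" "grad \<mu> k (x + \<rho>) - grad \<mu> k x \<le> K * (1 + T) * \<rho>"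
proof -
  define j where "j = gridN T h - k"
  have "real j * h \<le> real (gridN T h) * h"
    unfolding j_def using step_pos by (intro mult_right_mono) auto
  then have j: "real j * h \<le> T"
    using grid_exact by simp
  have grad: "grad \<mu> k = deriv (mollify \<phi> \<epsilon> (interp \<rho> (V \<mu> j)))"
    unfolding j_def veps_grid_eq[OF step_pos] ..
  obtain D where "(mollify \<phi> \<epsilon> (interp \<rho> (V \<mu> j)) has_real_derivative D) (at x)" "\<bar>D\<bar> \<le> grad_bound"
    using mollified_value_has_deriv[OF j] by blast
  then show "\<bar>grad \<mu> k x\<bar> \<le> grad_bound"
    unfolding grad by (simp add: DERIV_imp_deriv)
  show "grad \<mu> k (x + \<rho>) - grad \<mu> k x \<le> K * (1 + T) * \<rho>"
    unfolding grad by (rule deriv_mollified_value_diff_le[OF j])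
qed

lemma mass_Suc_bounds:
  assumes "k \<le> gridN T h" "\<And>j. 0 \<le> mass \<mu> k j \<and> mass \<mu> k j \<le> M"
  shows "0 \<le> mass \<mu> (Suc k) i \<and> mass \<mu> (Suc k) i \<le> growth * M"
proof -
  define s where "s = sqrt h * \<sigma> (real k * h)"
  define \<Psi>p where "\<Psi>p j = of_int j * \<rho> - h * grad \<mu> k (of_int j * \<rho>) + s" for j
  define \<Psi>m where "\<Psi>m j = of_int j * \<rho> - h * grad \<mu> k (of_int j * \<rho>) + - s" for j
  have "real k * h \<le> real (gridN T h) * h"
    using assms(1) step_pos by (intro mult_right_mono) auto
  then have "real k * h \<in> {0..T}"
    using grid_exact step_pos by simp
  then have s: "\<bar>s\<bar> \<le> sqrt h * S\<sigma>" "\<bar>- s\<bar> \<le> sqrt h * S\<sigma>"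
    unfolding s_def using \<sigma>_bound step_pos by (simp_all add: abs_mult mult_left_mono)
  note grad = grad_bounds[OF assms(1)]
  have "mass \<mu> (Suc k) i = (1 / 2) * infsum (\<lambda>j. (hat \<rho> i (\<Psi>p j) + hat \<rho> i (\<Psi>m j)) * mass \<mu> k j) UNIV"
    unfolding \<Psi>p_def \<Psi>m_def s_def fp.simps Let_def by simp
  also have "0 \<le> \<dots> \<and> \<dots> \<le> growth * M"
  proof (rule transport_step_bounds[OF mesh_pos assms(2)])
    show "\<bar>\<Psi>p j - of_int j * \<rho>\<bar> \<le> drift" for j
      unfolding \<Psi>p_def using grad(1) s(1) by (rule characteristic_drift_le)
    show "\<bar>\<Psi>m j - of_int j * \<rho>\<bar> \<le> drift" for j
      unfolding \<Psi>m_def using grad(1) s(2) by (rule characteristic_drift_le)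
    show "(\<Sum>j\<in>J. hat \<rho> i (\<Psi>p j)) \<le> growth" if "finite J" for J
      unfolding \<Psi>p_def using grad(1) grad(2) s(1) that by (rule sum_hat_characteristic_le)
    show "(\<Sum>j\<in>J. hat \<rho> i (\<Psi>m j)) \<le> growth" if "finite J" for J
      unfolding \<Psi>m_def using grad(1) grad(2) s(2) that by (rule sum_hat_characteristic_le)
  qed
  finally show ?thesis .
qed

lemma mass_bounds: "k \<le> gridN T h + 1 \<Longrightarrow> 0 \<le> mass \<mu> k i \<and> mass \<mu> k i \<le> growth ^ k * (\<rho> * B0)"
proof (induction k arbitrary: i)
  case 0
  have "measure m0 {of_int i * \<rho> - \<rho> / 2 .. of_int i * \<rho> + \<rho> / 2}
      \<le> B0 * ((of_int i * \<rho> + \<rho> / 2) - (of_int i * \<rho> - \<rho> / 2))"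
    by (rule measure_density_interval_le[OF m0_density f0_measurable f0_bound B0_nonneg])
      (use mesh_pos in simp)
  then show ?case
    by (simp add: mult.commute)
next
  case (Suc k)
  then show ?case
    using mass_Suc_bounds[of k "growth ^ k * (\<rho> * B0)" i] by (simp add: mult.assoc)
qed

lemma abs_dens_grid_le:
  assumes "k \<le> gridN T h + 1"
  shows "\<bar>dens_grid \<phi> \<epsilon> \<rho> h T \<sigma> F G m0 \<mu> k x\<bar> \<le> density_bound"
proof -
  have "growth ^ k * (\<rho> * B0) \<le> growth ^ (gridN T h + 1) * (\<rho> * B0)"
    using growth_ge_1 assms mesh_pos B0_nonneg by (intro mult_right_mono power_increasing) auto
  then have "0 \<le> mass \<mu> k i \<and> mass \<mu> k i \<le> growth ^ (gridN T h + 1) * (\<rho> * B0)" for i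
    using mass_bounds[OF assms, of i] by linarith
  from sum_cells_bounds[where f = "mass \<mu> k", OF mesh_pos this]
  show ?thesis
    unfolding dens_grid_def density_bound_def using mesh_pos
    by (simp add: abs_mult field_simps)
qed

lemma abs_dens_le:
  assumes t: "t \<in> {0..T}"
  shows "\<bar>dens \<phi> \<epsilon> \<rho> h T \<sigma> F G m0 \<mu> t x\<bar> \<le> density_bound"
proof -
  define k where "k = nat \<lfloor>t / h\<rfloor>"
  have "0 \<le> t / h"
    using t step_pos by simp
  then have k: "real k \<le> t / h" "t / h < real k + 1"
    unfolding k_def by linarith+
  moreover have "t \<le> real (gridN T h) * h"
    using t grid_exact by simp
  then have "t / h \<le> real (gridN T h)"
    using step_pos by (simp add: pos_divide_le_eq)
  ultimately have "k \<le> gridN T h"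
    by linarith
  define a where "a = (real (Suc k) * h - t) / h"
  have "0 \<le> a" "a \<le> 1"
    unfolding a_def using k step_pos by (simp_all add: field_simps)
  moreover have "(t - real k * h) / h = 1 - a"
    unfolding a_def using step_pos by (simp add: field_simps)
  ultimately show ?thesis
    unfolding dens_def k_def[symmetric] Let_def a_def[symmetric]
    using \<open>k \<le> gridN T h\<close> by (simp add: abs_convex_comb_le abs_dens_grid_le)
qed

end

lemma density_bound_le_exp:
  assumes "K * (1 + T) * h \<le> 1 / 3"
  shows "density_bound \<le> 3 * exp (2 * K * (1 + T) * T + 1) * B0"
proof -
  define c where "c = 2 * K * (1 + T) * h"
  have "0 \<le> c" "c \<le> 1"
    unfolding c_def using assms K_nonneg horizon_nonneg step_pos by simp_all
  have "growth ^ (gridN T h + 1) = (1 + c) ^ (gridN T h + 1)"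
    unfolding growth_def c_def using assms by simp
  also have "\<dots> \<le> exp c ^ (gridN T h + 1)"
    using \<open>0 \<le> c\<close> by (intro power_mono exp_ge_add_one_self) simp
  also have "\<dots> = exp (2 * K * (1 + T) * (real (gridN T h) * h) + c)"
    unfolding c_def by (simp flip: exp_of_nat_mult exp_add add: algebra_simps)
  also have "\<dots> \<le> exp (2 * K * (1 + T) * T + 1)"
    using \<open>c \<le> 1\<close> grid_exact by simp
  finally show ?thesis
    unfolding density_bound_def using B0_nonneg by (simp add: mult_right_mono)
qed

end


lemma gridN_mult_eq:
  assumes "0 < h" "T / h \<in> \<nat>"
  shows "real (gridN T h) * h = T"
proof -
  obtain m where m: "T / h = of_nat m"
    using assms(2) by (auto elim: Nats_cases)
  then have "gridN T h = m"
    unfolding gridN_def by simp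
  then show ?thesis
    using m assms(1) by (simp add: divide_eq_eq)
qed

lemma assumption_A1E:
  assumes "assumption_A1 T F G \<sigma> m0"
  obtains K S\<sigma> f0 B0 where "0 \<le> K"
    and "\<And>m. m \<in> P1 \<Longrightarrow> (\<forall>x. \<bar>F x m\<bar> \<le> K \<and> \<bar>G x m\<bar> \<le> K) \<and> C2_bdd (\<lambda>x. F x m) K \<and> C2_bdd (\<lambda>x. G x m) K"
    and "\<And>t. t \<in> {0..T} \<Longrightarrow> \<bar>\<sigma> t\<bar> \<le> S\<sigma>"
    and "m0 = density lborel (\<lambda>x. ennreal (f0 x))" "f0 \<in> borel_measurable borel"
    and "AE x in lborel. f0 x \<le> B0" "0 \<le> B0"
proof -
  obtain K f0 B where K: "\<And>m. m \<in> P1 \<Longrightarrow> (\<forall>x. \<bar>F x m\<bar> \<le> K \<and> \<bar>G x m\<bar> \<le> K)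
        \<and> C2_bdd (\<lambda>x. F x m) K \<and> C2_bdd (\<lambda>x. G x m) K"
    and \<sigma>: "continuous_on {0..T} \<sigma>" and f0: "m0 = density lborel (\<lambda>x. ennreal (f0 x))"
      "f0 \<in> borel_measurable borel" "AE x in lborel. f0 x \<le> B"
    using assms unfolding assumption_A1_def by blast
  have C2_max: "C2_bdd f (max K 0)" if "C2_bdd f K" for f
    using that unfolding C2_bdd_def by (meson max.cobounded1 order_trans)
  have "bounded (\<sigma> ` {0..T})"
    using compact_continuous_image[OF \<sigma>] by (simp add: compact_imp_bounded)
  then obtain S\<sigma> where S\<sigma>: "\<And>t. t \<in> {0..T} \<Longrightarrow> \<bar>\<sigma> t\<bar> \<le> S\<sigma>"
    unfolding bounded_real by blast
  have f0_le: "AE x in lborel. f0 x \<le> max B 0"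
    using f0(3) by (rule eventually_mono) simp
  show thesis
  proof (rule that[of "max K 0" S\<sigma> f0 "max B 0", OF _ _ S\<sigma> f0(1,2) f0_le])
    show "(\<forall>x. \<bar>F x m\<bar> \<le> max K 0 \<and> \<bar>G x m\<bar> \<le> max K 0)
        \<and> C2_bdd (\<lambda>x. F x m) (max K 0) \<and> C2_bdd (\<lambda>x. G x m) (max K 0)" if "m \<in> P1" for m
      using K[OF that] C2_max by (meson max.coboundedI1)
  qed simp_all
qed

lemma mollifier_imp_kernel:
  assumes "mollifier \<phi>"
  obtains R Pm where "mollifier_kernel \<phi> R Pm"
proof -
  obtain R0 where R0: "\<And>x. R0 < \<bar>x\<bar> \<Longrightarrow> \<phi> x = 0"
    using assms unfolding mollifier_def by (meson less_eq_real_def)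
  define R where "R = max R0 0"
  have support: "\<phi> x = 0" if "R < \<bar>x\<bar>" for x
    using R0 that unfolding R_def by simp
  have "\<phi> differentiable at x" "deriv \<phi> differentiable at x" for x
    using assms unfolding mollifier_def by (metis funpow_0 funpow_Suc_right o_apply)+
  then have has_deriv: "(\<phi> has_real_derivative deriv \<phi> x) (at x)"
    and continuous_deriv: "continuous_on UNIV (deriv \<phi>)" for x
    by (auto simp: DERIV_deriv_iff_real_differentiable differentiable_imp_continuous_within
        intro!: continuous_at_imp_continuous_on)
  have deriv_0: "deriv \<phi> x = 0" if "R < \<bar>x\<bar>" for x
  proof -
    have "open {y::real. R < \<bar>y\<bar>}"
      by (intro open_Collect_less continuous_intros)
    then have "(\<phi> has_real_derivative 0) (at x)"
      by (rule has_field_derivative_transform_within_open[OF DERIV_const]) (use that support in auto)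
    then show ?thesis
      using has_deriv DERIV_unique by blast
  qed
  have "bounded (deriv \<phi> ` {-R..R})"
    by (intro compact_imp_bounded compact_continuous_image continuous_on_subset[OF continuous_deriv]) auto
  then obtain Pm where Pm: "\<And>x. x \<in> {-R..R} \<Longrightarrow> \<bar>deriv \<phi> x\<bar> \<le> Pm"
    unfolding bounded_real by blast
  have "\<bar>deriv \<phi> x\<bar> \<le> max Pm 0" for x
  proof (cases "R < \<bar>x\<bar>")
    case False
    then have "x \<in> {-R..R}"
      by auto
    then show ?thesis
      using Pm by (meson max.coboundedI1)
  qed (simp add: deriv_0)
  moreover have "0 \<le> R"
    unfolding R_def by simp
  ultimately have "mollifier_kernel \<phi> R (max Pm 0)"
    using assms has_deriv continuous_deriv support unfolding mollifier_def by unfold_locales blast+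
  then show thesis
    by (rule that)
qed

lemma eventually_le_imp_bounded:
  fixes Q :: "nat \<Rightarrow> real"
  assumes "\<forall>\<^sub>F n in sequentially. Q n \<le> U"
  obtains c where "0 < c" "\<And>n. Q n \<le> c"
proof -
  obtain N where N: "\<And>n. N \<le> n \<Longrightarrow> Q n \<le> U"
    using assms unfolding eventually_sequentially by blast
  define c where "c = Max (insert 1 (insert U (Q ` {..<N})))"
  have le_c: "y \<le> c" if "y \<in> insert 1 (insert U (Q ` {..<N}))" for y
    unfolding c_def using that by (intro Max_ge) auto
  have "Q n \<le> c" for n
    using N[of n] le_c[of U] le_c[of "Q n"] by (cases "N \<le> n") auto
  moreover have "0 < c"
    using le_c[of 1] by simp
  ultimately show thesis
    using that by blast
qed

lemma scheme_density_bounds: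
  assumes "0 < T" "assumption_A1 T F G \<sigma> m0" "mollifier \<phi>"
    and "\<And>n. 0 < \<rho>s n" "\<And>n. 0 < hs n" "\<And>n. 0 < \<epsilon>s n" "\<And>n. T / hs n \<in> \<nat>"
  obtains C Q U where "\<And>n. C * hs n \<le> 1 / 3 \<Longrightarrow> Q n \<le> U"
    and "\<And>n \<mu> t x. cont_P1 T \<mu> \<Longrightarrow> t \<in> {0..T}
      \<Longrightarrow> \<bar>dens \<phi> (\<epsilon>s n) (\<rho>s n) (hs n) T \<sigma> F G m0 \<mu> t x\<bar> \<le> Q n"
proof -
  obtain K S\<sigma> f0 B0 where K: "0 \<le> K"
    and data: "\<And>m. m \<in> P1 \<Longrightarrow> (\<forall>x. \<bar>F x m\<bar> \<le> K \<and> \<bar>G x m\<bar> \<le> K) \<and> C2_bdd (\<lambda>x. F x m) K \<and> C2_bdd (\<lambda>x. G x m) K"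
    and \<sigma>: "\<And>t. t \<in> {0..T} \<Longrightarrow> \<bar>\<sigma> t\<bar> \<le> S\<sigma>"
    and f0: "m0 = density lborel (\<lambda>x. ennreal (f0 x))" "f0 \<in> borel_measurable borel"
      "AE x in lborel. f0 x \<le> B0" "0 \<le> B0"
    using assumption_A1E[OF assms(2)] by blast
  obtain R Pm where kernel: "mollifier_kernel \<phi> R Pm"
    using mollifier_imp_kernel[OF assms(3)] by blast
  define U where "U = 3 * exp (2 * K * (1 + T) * T + 1) * B0"
  have "\<exists>q. (K * (1 + T) * hs n \<le> 1 / 3 \<longrightarrow> q \<le> U) \<and> (\<forall>\<mu> t x. cont_P1 T \<mu> \<longrightarrow> t \<in> {0..T}
      \<longrightarrow> \<bar>dens \<phi> (\<epsilon>s n) (\<rho>s n) (hs n) T \<sigma> F G m0 \<mu> t x\<bar> \<le> q)" for n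
  proof -
    interpret mfg_scheme "\<rho>s n" "hs n" T \<sigma> F G K \<phi> R Pm "\<epsilon>s n" S\<sigma> B0 m0 f0
      by (intro mfg_scheme.intro hjb_data.intro mfg_scheme_axioms.intro kernel data \<sigma> f0 K
          assms(4-6) less_imp_le[OF assms(1)] gridN_mult_eq[OF assms(5) assms(7)])
    have "\<bar>dens \<phi> (\<epsilon>s n) (\<rho>s n) (hs n) T \<sigma> F G m0 \<mu> t x\<bar> \<le> density_bound"
      if "cont_P1 T \<mu>" "t \<in> {0..T}" for \<mu> t x
    proof -
      have "\<mu> ` {0..T} \<subseteq> P1"
        using that(1) unfolding cont_P1_def by blast
      then show ?thesis
        by (rule abs_dens_le) (rule that(2))
    qed
    then show ?thesis
      using density_bound_le_exp unfolding U_def by (intro exI[of _ density_bound]) simp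
  qed
  then obtain Q where "\<forall>n. (K * (1 + T) * hs n \<le> 1 / 3 \<longrightarrow> Q n \<le> U) \<and> (\<forall>\<mu> t x. cont_P1 T \<mu> \<longrightarrow> t \<in> {0..T}
      \<longrightarrow> \<bar>dens \<phi> (\<epsilon>s n) (\<rho>s n) (hs n) T \<sigma> F G m0 \<mu> t x\<bar> \<le> Q n)"
    using choice[of "\<lambda>n q. (K * (1 + T) * hs n \<le> 1 / 3 \<longrightarrow> q \<le> U) \<and> (\<forall>\<mu> t x. cont_P1 T \<mu> \<longrightarrow> t \<in> {0..T}
      \<longrightarrow> \<bar>dens \<phi> (\<epsilon>s n) (\<rho>s n) (hs n) T \<sigma> F G m0 \<mu> t x\<bar> \<le> q)"] by blast
  then show thesis
    by (intro that[of "K * (1 + T)" Q U]) blast+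
qed

theorem proposition4p7:
  fixes T :: real and F G :: "real \<Rightarrow> real measure \<Rightarrow> real" and \<sigma> :: "real \<Rightarrow> real"
    and m0 :: "real measure" and \<phi> :: "real \<Rightarrow> real"
    and \<rho>s hs \<epsilon>s :: "nat \<Rightarrow> real"
  assumes "T > 0"
    and "assumption_A1 T F G \<sigma> m0"
    and "mollifier \<phi>"
    and "\<And>n. \<rho>s n > 0" and "\<And>n. hs n > 0" and "\<And>n. \<epsilon>s n > 0"
    and "\<rho>s \<longlonglongrightarrow> 0" and "hs \<longlonglongrightarrow> 0" and "\<epsilon>s \<longlonglongrightarrow> 0"
    and "\<And>n. T / hs n \<in> \<nat>"
  shows "\<exists>c>0. \<forall>n. \<forall>\<mu>. cont_P1 T \<mu> \<longrightarrow> (\<forall>t\<in>{0..T}.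
           AE x in lborel. \<bar>dens \<phi> (\<epsilon>s n) (\<rho>s n) (hs n) T \<sigma> F G m0 \<mu> t x\<bar> \<le> c)"
proof -
  obtain C Q U where Q: "\<And>n. C * hs n \<le> 1 / 3 \<Longrightarrow> Q n \<le> U"
    and dens_le_Q: "\<And>n \<mu> t x. cont_P1 T \<mu> \<Longrightarrow> t \<in> {0..T}
      \<Longrightarrow> \<bar>dens \<phi> (\<epsilon>s n) (\<rho>s n) (hs n) T \<sigma> F G m0 \<mu> t x\<bar> \<le> Q n"
    using scheme_density_bounds[where \<rho>s=\<rho>s and hs=hs and \<epsilon>s=\<epsilon>s, OF assms(1-6,10)] by blast
  have "(\<lambda>n. C * hs n) \<longlonglongrightarrow> 0"
    using assms(8) by (rule tendsto_mult_right_zero)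
  then have "\<forall>\<^sub>F n in sequentially. C * hs n < 1 / 3"
    by (rule order_tendstoD) simp
  then have "\<forall>\<^sub>F n in sequentially. Q n \<le> U"
    by eventually_elim (simp add: Q)
  then obtain c where "0 < c" "\<And>n. Q n \<le> c"
    using eventually_le_imp_bounded by blast
  then show ?thesis
    using dens_le_Q by (meson AE_I2 order_trans)
qed

end
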